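(* Let $E_8$ denote the complex simple simply-connected Lie group of type $E_8$, with Lie algebra $\mathfrak{e}_8$, simple roots $\alpha_1,\dots,\alpha_8$, fundamental weights $\omega_1,\dots,\omega_8$, and fundamental characters $\chi_1,\dots,\chi_8$ ($\chi_l$ the character of the irreducible representation with highest weight $\omega_l$). For each $k$ with $0\le k\le 248$, let $N^{(k)}_\iota\in\mathbb{Z}$, $\iota\in\mathbb{Z}_{\ge 0}^8$, be the unique integers (finitely many nonzero) such that $$\chi_{\wedge^k \mathfrak{e}_8}=\sum_{\iota\in\mathbb{Z}_{\ge0}^8} N^{(k)}_\iota \prod_{l=1}^8 \chi_l^{\iota_l}$$ in the representation ring $\mathrm{Rep}(E_8)\cong\mathbb{Z}[\chi_1,\dots,\chi_8]$, where $\wedge^k\mathfrak{e}_8$ is the $k$-th exterior power of the adjoint representation. Let $e_{jk}$ denote the coefficient of $\alpha_k$ in the expansion of $\omega_j$ in the basis of simple roots (i.e. $e_{jk}=(C^{-1})_{jk}$, with $C$ the Cartan matrix of $E_8$), and define the set of admissible exponents $$\mathfrak{I}=\Big\{\iota\in\mathbb{Z}_{\ge0}^8 \;\Big|\; \sum_{j=1}^8 \iota_j e_{jk}\le 2\sum_{j=1}^8 e_{jk}\ \text{ for all } k=1,\dots,8\Big\}.$$ Then for every $\iota\in\mathbb{Z}_{\ge0}^8$ with $\iota\notin\mathfrak{I}$, one has $N^{(k)}_\iota=0$ for all $k$.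
   Context: The representation ring $\mathrm{Rep}(E_8)$ (equivalently the ring of Weyl-invariant regular functions on the maximal torus, via characters) is the polynomial ring over $\mathbb{Z}$ in the fundamental characters $\chi_1,\dots,\chi_8$, so the coefficients $N^{(k)}_\iota$ are well defined. The labelling of simple roots, fundamental weights and fundamental characters is any fixed one, used consistently (fundamental weight $\omega_j$ dual to the simple coroot of $\alpha_j$). Note that $2\sum_j e_{jk}$ is the $\alpha_k$-coefficient of $2\rho=2\sum_j\omega_j$, so $\iota\in\mathfrak{I}$ means that $2\rho-\sum_j\iota_j\omega_j$ has nonnegative coefficients in the simple-root basis. *)

theory Defs
  imports Complex_Main "HOL-Library.Numeral_Type" "HOL-Library.Poly_Mapping" "HOL-Library.Function_Algebras"
begin

text \<open>Index type for simple roots / fundamental weights: the numeral type 8,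
  with elements 0,...,7 (Bourbaki node i corresponds to element i-1).
  Weights are written in the basis of fundamental weights:
  a weight is a function 8 => int giving its omega-coordinates.\<close>

type_synonym weight = "8 \<Rightarrow> int"

text \<open>The representation ring (Weyl-invariant part of the group ring of the weight
  lattice); we work inside the full group ring Z[weight lattice].\<close>
type_synonym grpring = "weight \<Rightarrow>\<^sub>0 int"

definition e8_edges :: "8 set set" where
  "e8_edges = {{0,2},{2,3},{3,4},{4,5},{5,6},{6,7},{1,3}}"

text \<open>Cartan matrix of E8 (Bourbaki labelling): C i j = <alpha_i, alpha_j^vee>.\<close>
definition cartan :: "8 \<Rightarrow> 8 \<Rightarrow> int" where
  "cartan i j = (if i = j then 2 else if {i, j} \<in> e8_edges then -1 else 0)"

text \<open>Simple root alpha_i in fundamental-weight coordinates.\<close>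
definition alpha :: "8 \<Rightarrow> weight" where
  "alpha i = (\<lambda>j. cartan i j)"

definition omega :: "8 \<Rightarrow> weight" where
  "omega l = (\<lambda>j. if j = l then 1 else 0)"

definition einv :: "8 \<Rightarrow> 8 \<Rightarrow> rat" where
  "einv = (THE E. \<forall>j m. (\<Sum>k\<in>UNIV. E j k * of_int (cartan k m)) = (if j = m then 1 else 0))"

definition rootcoef :: "weight \<Rightarrow> 8 \<Rightarrow> rat" where
  "rootcoef lam k = (\<Sum>j\<in>UNIV. of_int (lam j) * einv j k)"

definition sref :: "8 \<Rightarrow> weight \<Rightarrow> weight" where
  "sref i lam = (\<lambda>j. lam j - lam i * cartan i j)"

inductive_set weyl :: "(weight \<Rightarrow> weight) set" where
  weyl_id: "id \<in> weyl"
| weyl_step: "w \<in> weyl \<Longrightarrow> sref i \<circ> w \<in> weyl"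

definition roots :: "weight set" where
  "roots = {w (alpha i) | w i. w \<in> weyl}"

definition pos_roots :: "weight set" where
  "pos_roots = {\<beta> \<in> roots. \<forall>k. rootcoef \<beta> k \<ge> 0}"

text \<open>Sign of a Weyl group element: (-1)^(length), length = number of positive
  roots sent to negative roots.\<close>
definition wsign :: "(weight \<Rightarrow> weight) \<Rightarrow> int" where
  "wsign w = (-1) ^ card {\<beta> \<in> pos_roots. w \<beta> \<notin> pos_roots}"

definition ex :: "weight \<Rightarrow> grpring" where
  "ex \<mu> = Poly_Mapping.single \<mu> 1"

definition rho :: weight where
  "rho = (\<lambda>_. 1)"

definition alt :: "weight \<Rightarrow> grpring" where
  "alt \<mu> = (\<Sum>w\<in>weyl. of_int (wsign w) * ex (w \<mu>))"

text \<open>Character of the irreducible representation of highest weight lambda,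
  characterised by the Weyl character formula chi_lambda * A_rho = A_(lambda+rho).\<close>
definition irrchar :: "weight \<Rightarrow> grpring" where
  "irrchar lam = (THE \<chi>. \<chi> * alt rho = alt (lam + rho))"

definition fundchar :: "8 \<Rightarrow> grpring" where
  "fundchar l = irrchar (omega l)"

text \<open>Weights of the adjoint representation, with multiplicity: each root once
  (Inl beta) and the zero weight 8 times (Inr i, the Cartan subalgebra).\<close>
definition adj_index :: "(weight + 8) set" where
  "adj_index = Inl ` roots \<union> Inr ` UNIV"

definition adj_wt :: "weight + 8 \<Rightarrow> weight" where
  "adj_wt x = (case x of Inl \<beta> \<Rightarrow> \<beta> | Inr _ \<Rightarrow> 0)"

text \<open>Character of the k-th exterior power of the adjoint representation:
  the k-th elementary symmetric function of the (multiset of) weights.\<close>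
definition extchar :: "nat \<Rightarrow> grpring" where
  "extchar k = (\<Sum>S\<in>{S. S \<subseteq> adj_index \<and> card S = k}. ex (\<Sum>x\<in>S. adj_wt x))"

definition fundmono :: "(8 \<Rightarrow> nat) \<Rightarrow> grpring" where
  "fundmono \<iota> = (\<Prod>l\<in>UNIV. fundchar l ^ \<iota> l)"

definition admissible :: "(8 \<Rightarrow> nat) set" where
  "admissible = {\<iota>. \<forall>k. (\<Sum>j\<in>UNIV. of_nat (\<iota> j) * einv j k) \<le> 2 * (\<Sum>j\<in>UNIV. einv j k)}"

end

theory Submission
  imports Defs
begin

text \<open>Each fundamental character \<open>\<chi>\<^sub>l\<close> is unitriangular: its weight \<open>\<omega>\<^sub>l\<close> occurs with coefficient 1
  and every other weight lies below \<open>\<omega>\<^sub>l\<close> in the root order. Hence the monomial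
  \<open>\<Prod>\<^sub>l \<chi>\<^sub>l\<^bsup>\<iota>\<^sub>l\<^esup>\<close> is unitriangular with leading weight \<open>\<Sum>\<^sub>l \<iota>\<^sub>l \<omega>\<^sub>l\<close>, and these leading weights are
  distinct. Among the inadmissible \<open>\<iota>\<close> with \<open>N\<^sub>\<iota> \<noteq> 0\<close> take one of maximal height; no other
  monomial contributes at its leading weight, so \<open>N\<^sub>\<iota>\<close> is the coefficient of \<open>\<chi>\<^bsub>\<wedge>\<^sup>k e\<^sub>8\<^esub>\<close> there.
  But a weight of \<open>\<wedge>\<^sup>k e\<^sub>8\<close> is a sum of distinct roots, hence bounded in the root order by the
  sum \<open>2\<rho>\<close> of the positive roots, which is exactly what admissibility expresses.
  Unitriangularity of \<open>\<chi>\<^sub>l\<close> comes from the Weyl character formula, developed below for the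
  explicit E8 root system.\<close>

section \<open>The Cartan matrix of E8 and its inverse\<close>

lemma UNIV_8: "(UNIV :: 8 set) = {0, 1, 2, 3, 4, 5, 6, 7}"
proof -
  have "x \<in> {0, 1, 2, 3, 4, 5, 6, 7}" for x :: 8
  proof (cases x rule: bit0_cases)
    case (of_int z)
    then have "z \<in> {0, 1, 2, 3, 4, 5, 6, 7}" by auto
    then show ?thesis using of_int by auto
  qed
  then show ?thesis by blast
qed

lemma all_8: "(\<forall>i::8. P i) \<longleftrightarrow> P 0 \<and> P 1 \<and> P 2 \<and> P 3 \<and> P 4 \<and> P 5 \<and> P 6 \<and> P 7"
  using UNIV_8 by (metis UNIV_I insertE empty_iff)

lemma all_less_8: "(\<forall>n<(8::nat). P n) \<longleftrightarrow> P 0 \<and> P 1 \<and> P 2 \<and> P 3 \<and> P 4 \<and> P 5 \<and> P 6 \<and> P 7"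
  by (simp add: numeral_eq_Suc less_Suc_eq all_conj_distrib conj_ac)

definition node :: "8 \<Rightarrow> nat" where
  "node i = (if i = 0 then 0 else if i = 1 then 1 else if i = 2 then 2 else if i = 3 then 3
     else if i = 4 then 4 else if i = 5 then 5 else if i = 6 then 6 else 7)"

lemma node_less: "node i < 8"
  by (simp add: node_def)

lemma of_nat_node [simp]: "of_nat (node i) = i"
proof -
  have "\<forall>i::8. of_nat (node i) = i" unfolding all_8 by (simp add: node_def)
  then show ?thesis by blast
qed

lemma node_of_nat: "n < 8 \<Longrightarrow> node (of_nat n) = n"
proof -
  assume "n < 8"
  then have "n \<in> {0, 1, 2, 3, 4, 5, 6, 7}" by auto
  then show ?thesis by (auto simp: node_def)
qed

lemma node_inject: "node i = node j \<longleftrightarrow> i = j"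
  by (metis of_nat_node)

lemma eq_of_nat_iff_node: "n < 8 \<Longrightarrow> i = of_nat n \<longleftrightarrow> node i = n"
  by (metis node_of_nat of_nat_node)

lemma sum_UNIV_8: "(\<Sum>i\<in>UNIV. f (i::8)) = (\<Sum>n<8. f (of_nat n))"
proof -
  have "bij_betw node UNIV {..<8}"
    by (rule bij_betw_byWitness[where f' = of_nat]) (auto simp: node_less node_of_nat)
  then have "(\<Sum>n<8. f (of_nat n)) = (\<Sum>i\<in>UNIV. f (of_nat (node i)))"
    by (rule sum.reindex_bij_betw[symmetric])
  then show ?thesis by simp
qed

lemma sum_list_upt_8: "sum_list (map f [0..<8]) = (\<Sum>n<8. f n)"
  by (simp add: sum_set_upt_conv_sum_list_nat[symmetric] lessThan_atLeast0)

lemma list_all_upt_8: "list_all P [0..<8] \<longleftrightarrow> (\<forall>n<8. P n)"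
  by (auto simp: list_all_iff)

definition cartan_table :: "nat \<Rightarrow> nat \<Rightarrow> int" where
  "cartan_table i j = (if i = j then 2 else if (i, j) \<in> set [(0,2), (2,0), (2,3), (3,2), (3,4), (4,3),
     (4,5), (5,4), (5,6), (6,5), (6,7), (7,6), (1,3), (3,1)] then -1 else 0)"

lemma cartan_eq_table: "cartan i j = cartan_table (node i) (node j)"
proof -
  have "\<forall>a<8. \<forall>b<8. cartan (of_nat a) (of_nat b) = cartan_table a b"
    by (simp add: all_less_8 cartan_def cartan_table_def e8_edges_def doubleton_eq_iff)
  then show ?thesis using node_less by (metis of_nat_node)
qed

lemma cartan_sym: "cartan i j = cartan j i"
  by (simp add: cartan_def insert_commute)

lemma cartan_diag [simp]: "cartan i i = 2"
  by (simp add: cartan_def)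

definition inverse_cartan_table :: "int list list" where
  "inverse_cartan_table = [[4,5,7,10,8,6,4,2], [5,8,10,15,12,9,6,3], [7,10,14,20,16,12,8,4],
     [10,15,20,30,24,18,12,6], [8,12,16,24,20,15,10,5], [6,9,12,18,15,12,8,4],
     [4,6,8,12,10,8,6,3], [2,3,4,6,5,4,3,2]]"

definition inverse_cartan :: "8 \<Rightarrow> 8 \<Rightarrow> int" where
  "inverse_cartan i j = inverse_cartan_table ! node i ! node j"

lemma inverse_cartan_table_checks:
  "list_all (\<lambda>j. list_all (\<lambda>m.
      sum_list (map (\<lambda>k. inverse_cartan_table ! j ! k * cartan_table k m) [0..<8]) = (if j = m then 1 else 0)
    \<and> sum_list (map (\<lambda>k. cartan_table j k * inverse_cartan_table ! k ! m) [0..<8]) = (if j = m then 1 else 0)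
    \<and> inverse_cartan_table ! j ! m \<ge> 0) [0..<8]) [0..<8]"
  by code_simp

lemma inverse_cartan_cartan: "(\<Sum>k\<in>UNIV. inverse_cartan j k * cartan k m) = (if j = m then 1 else 0)"
  using inverse_cartan_table_checks node_less[of j] node_less[of m]
  unfolding list_all_upt_8 sum_list_upt_8
  by (simp add: sum_UNIV_8 inverse_cartan_def cartan_eq_table node_of_nat node_inject)

lemma cartan_inverse_cartan: "(\<Sum>k\<in>UNIV. cartan j k * inverse_cartan k m) = (if j = m then 1 else 0)"
  using inverse_cartan_table_checks node_less[of j] node_less[of m]
  unfolding list_all_upt_8 sum_list_upt_8
  by (simp add: sum_UNIV_8 inverse_cartan_def cartan_eq_table node_of_nat node_inject)

lemma inverse_cartan_nonneg: "inverse_cartan j m \<ge> 0"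
  using inverse_cartan_table_checks node_less[of j] node_less[of m]
  unfolding list_all_upt_8 inverse_cartan_def by blast

lemma einv_eq_inverse_cartan: "einv = (\<lambda>j k. of_int (inverse_cartan j k))"
  unfolding einv_def
proof (rule the_equality; intro allI ext)
  fix j m
  show "(\<Sum>k\<in>UNIV. of_int (inverse_cartan j k) * of_int (cartan k m) :: rat) = (if j = m then 1 else 0)"
    using arg_cong[OF inverse_cartan_cartan, of "of_int :: int \<Rightarrow> rat"] by simp
next
  fix E :: "8 \<Rightarrow> 8 \<Rightarrow> rat" and j m
  assume E: "\<forall>j m. (\<Sum>k\<in>UNIV. E j k * of_int (cartan k m)) = (if j = m then 1 else 0)"
  have "E j m = (\<Sum>k\<in>UNIV. E j k * of_int (\<Sum>l\<in>UNIV. cartan k l * inverse_cartan l m))"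
    by (simp add: cartan_inverse_cartan if_distrib[of "of_int :: int \<Rightarrow> rat"] if_distrib[of "(*) _"] cong: if_cong)
  also have "\<dots> = (\<Sum>k\<in>UNIV. \<Sum>l\<in>UNIV. E j k * (of_int (cartan k l) * of_int (inverse_cartan l m)))"
    by (simp add: sum_distrib_left)
  also have "\<dots> = (\<Sum>l\<in>UNIV. \<Sum>k\<in>UNIV. E j k * (of_int (cartan k l) * of_int (inverse_cartan l m)))"
    by (rule sum.swap)
  also have "\<dots> = (\<Sum>l\<in>UNIV. (\<Sum>k\<in>UNIV. E j k * of_int (cartan k l)) * of_int (inverse_cartan l m))"
    by (simp add: sum_distrib_right mult.assoc)
  also have "\<dots> = of_int (inverse_cartan j m)"
    by (simp add: E if_distrib[of "\<lambda>x. x * _"] cong: if_cong)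
  finally show "E j m = of_int (inverse_cartan j m)" .
qed

section \<open>Weights in the basis of simple roots\<close>

definition root_coord :: "weight \<Rightarrow> 8 \<Rightarrow> int" where
  "root_coord \<mu> k = (\<Sum>j\<in>UNIV. \<mu> j * inverse_cartan j k)"

lemma rootcoef_eq_root_coord: "rootcoef \<mu> k = of_int (root_coord \<mu> k)"
  by (simp add: rootcoef_def root_coord_def einv_eq_inverse_cartan)

definition smul :: "int \<Rightarrow> weight \<Rightarrow> weight" where
  "smul c \<mu> = (\<lambda>j. c * \<mu> j)"

lemma sum_apply: "(\<Sum>x\<in>A. f x) j = (\<Sum>x\<in>A. f x j)"
  by (induction A rule: infinite_finite_induct) auto

lemma root_coord_add [simp]: "root_coord (a + b) k = root_coord a k + root_coord b k"
  by (simp add: root_coord_def algebra_simps sum.distrib)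

lemma root_coord_diff [simp]: "root_coord (a - b) k = root_coord a k - root_coord b k"
  by (simp add: root_coord_def algebra_simps sum_subtractf)

lemma root_coord_uminus [simp]: "root_coord (- a) k = - root_coord a k"
  by (simp add: root_coord_def sum_negf)

lemma root_coord_zero [simp]: "root_coord 0 k = 0"
  by (simp add: root_coord_def)

lemma root_coord_smul [simp]: "root_coord (smul c a) k = c * root_coord a k"
  by (simp add: root_coord_def smul_def sum_distrib_left mult.assoc)

lemma root_coord_sum: "root_coord (\<Sum>x\<in>A. f x) k = (\<Sum>x\<in>A. root_coord (f x) k)"
proof -
  have "root_coord (\<Sum>x\<in>A. f x) k = (\<Sum>j\<in>UNIV. \<Sum>x\<in>A. f x j * inverse_cartan j k)"
    by (simp add: root_coord_def sum_apply sum_distrib_right)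
  also have "\<dots> = (\<Sum>x\<in>A. \<Sum>j\<in>UNIV. f x j * inverse_cartan j k)"
    by (rule sum.swap)
  finally show ?thesis by (simp add: root_coord_def)
qed

lemma root_coord_alpha: "root_coord (alpha i) k = (if i = k then 1 else 0)"
  by (simp add: root_coord_def alpha_def cartan_inverse_cartan)

lemma weight_eq_sum_root_coord: "\<mu> j = (\<Sum>k\<in>UNIV. root_coord \<mu> k * cartan k j)"
proof -
  have "(\<Sum>k\<in>UNIV. root_coord \<mu> k * cartan k j)
      = (\<Sum>k\<in>UNIV. \<Sum>m\<in>UNIV. \<mu> m * (inverse_cartan m k * cartan k j))"
    by (simp add: root_coord_def sum_distrib_right mult.assoc)
  also have "\<dots> = (\<Sum>m\<in>UNIV. \<mu> m * (\<Sum>k\<in>UNIV. inverse_cartan m k * cartan k j))"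
    by (subst sum.swap) (simp add: sum_distrib_left)
  finally show ?thesis by (simp add: inverse_cartan_cartan if_distrib[of "(*) _"] cong: if_cong)
qed

lemma weight_eqI_root_coord: "(\<And>k. root_coord a k = root_coord b k) \<Longrightarrow> a = b"
  by (rule ext, subst weight_eq_sum_root_coord, subst (2) weight_eq_sum_root_coord) simp

lemma weight_eq_sum_alpha: "\<mu> = (\<Sum>k\<in>UNIV. smul (root_coord \<mu> k) (alpha k))"
  by (rule ext) (simp add: sum_apply smul_def alpha_def weight_eq_sum_root_coord[symmetric])

text \<open>E8 is simply laced, so identifying roots with coroots, \<^term>\<open>pairing \<mu> \<beta>\<close> is both
  \<open>\<langle>\<mu>, \<beta>\<^sup>\<or>\<rangle>\<close> and the invariant inner product with all roots of square length 2.\<close>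

definition pairing :: "weight \<Rightarrow> weight \<Rightarrow> int" where
  "pairing \<mu> \<beta> = (\<Sum>k\<in>UNIV. root_coord \<beta> k * \<mu> k)"

lemma pairing_alpha_left [simp]: "pairing (alpha i) \<mu> = \<mu> i"
  by (simp add: pairing_def alpha_def cartan_sym[of i] weight_eq_sum_root_coord[of \<mu> i])

lemma pairing_diff_left: "pairing (a - b) c = pairing a c - pairing b c"
  by (simp add: pairing_def algebra_simps sum_subtractf)

lemma pairing_diff_right: "pairing c (a - b) = pairing c a - pairing c b"
  by (simp add: pairing_def algebra_simps sum_subtractf)

lemma pairing_smul_left: "pairing (smul x a) c = x * pairing a c"
  by (simp add: pairing_def smul_def sum_distrib_left algebra_simps)

lemma pairing_smul_right: "pairing c (smul x a) = x * pairing c a"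
  by (simp add: pairing_def sum_distrib_left algebra_simps)

lemma pairing_uminus_right: "pairing c (- a) = - pairing c a"
  by (simp add: pairing_def sum_negf)

lemma alpha_self [simp]: "alpha i i = 2"
  by (simp add: alpha_def)

lemma pairing_alpha_right [simp]: "pairing \<mu> (alpha i) = \<mu> i"
  by (simp add: pairing_def root_coord_alpha if_distrib[of "\<lambda>x. x * _"] cong: if_cong)

lemma smul_alpha_self: "smul c (alpha i) i = 2 * c"
  by (simp add: smul_def)

lemma sref_eq: "sref i \<mu> = \<mu> - smul (\<mu> i) (alpha i)"
  by (simp add: sref_def smul_def alpha_def fun_eq_iff)

lemma pairing_sref: "pairing (sref i a) (sref i b) = pairing a b"
  by (simp add: sref_eq pairing_diff_left pairing_diff_right pairing_smul_left pairing_smul_right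
      smul_alpha_self algebra_simps)

lemma sref_add: "sref i (a + b) = sref i a + sref i b"
  by (simp add: sref_def fun_eq_iff algebra_simps)

lemma sref_diff: "sref i (a - b) = sref i a - sref i b"
  by (simp add: sref_def fun_eq_iff algebra_simps)

lemma sref_uminus: "sref i (- a) = - sref i a"
  by (simp add: sref_def fun_eq_iff algebra_simps)

lemma sref_smul: "sref i (smul c a) = smul c (sref i a)"
  by (simp add: sref_def smul_def fun_eq_iff algebra_simps)

lemma sref_sref [simp]: "sref i (sref i a) = a"
  by (simp add: sref_def fun_eq_iff algebra_simps)

lemma sref_alpha: "sref i (alpha i) = - alpha i"
  by (simp add: sref_def alpha_def fun_eq_iff)

lemma sref_eq_alpha_iff: "sref j x = alpha j \<longleftrightarrow> x = - alpha j"
  by (metis sref_alpha sref_sref sref_uminus minus_minus)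

lemma inj_sref: "inj (sref i)"
  by (metis injI sref_sref)

lemma root_coord_sref: "root_coord (sref i a) k = root_coord a k - (if i = k then a i else 0)"
  by (simp add: sref_eq root_coord_alpha)

section \<open>The root system\<close>

text \<open>The 120 positive roots of E8 in simple-root coordinates, grouped by height.\<close>

definition pos_root_table :: "int list list list" where
  "pos_root_table = [[],
  [[0,0,0,0,0,0,0,1], [0,0,0,0,0,0,1,0], [0,0,0,0,0,1,0,0], [0,0,0,0,1,0,0,0], [0,0,0,1,0,0,0,0], [0,0,1,0,0,0,0,0], [0,1,0,0,0,0,0,0], [1,0,0,0,0,0,0,0]],
  [[0,0,0,0,0,0,1,1], [0,0,0,0,0,1,1,0], [0,0,0,0,1,1,0,0], [0,0,0,1,1,0,0,0], [0,0,1,1,0,0,0,0], [0,1,0,1,0,0,0,0], [1,0,1,0,0,0,0,0]],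
  [[0,0,0,0,0,1,1,1], [0,0,0,0,1,1,1,0], [0,0,0,1,1,1,0,0], [0,0,1,1,1,0,0,0], [0,1,0,1,1,0,0,0], [0,1,1,1,0,0,0,0], [1,0,1,1,0,0,0,0]],
  [[0,0,0,0,1,1,1,1], [0,0,0,1,1,1,1,0], [0,0,1,1,1,1,0,0], [0,1,0,1,1,1,0,0], [0,1,1,1,1,0,0,0], [1,0,1,1,1,0,0,0], [1,1,1,1,0,0,0,0]],
  [[0,0,0,1,1,1,1,1], [0,0,1,1,1,1,1,0], [0,1,0,1,1,1,1,0], [0,1,1,1,1,1,0,0], [0,1,1,2,1,0,0,0], [1,0,1,1,1,1,0,0], [1,1,1,1,1,0,0,0]],
  [[0,0,1,1,1,1,1,1], [0,1,0,1,1,1,1,1], [0,1,1,1,1,1,1,0], [0,1,1,2,1,1,0,0], [1,0,1,1,1,1,1,0], [1,1,1,1,1,1,0,0], [1,1,1,2,1,0,0,0]],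
  [[0,1,1,1,1,1,1,1], [0,1,1,2,1,1,1,0], [0,1,1,2,2,1,0,0], [1,0,1,1,1,1,1,1], [1,1,1,1,1,1,1,0], [1,1,1,2,1,1,0,0], [1,1,2,2,1,0,0,0]],
  [[0,1,1,2,1,1,1,1], [0,1,1,2,2,1,1,0], [1,1,1,1,1,1,1,1], [1,1,1,2,1,1,1,0], [1,1,1,2,2,1,0,0], [1,1,2,2,1,1,0,0]],
  [[0,1,1,2,2,1,1,1], [0,1,1,2,2,2,1,0], [1,1,1,2,1,1,1,1], [1,1,1,2,2,1,1,0], [1,1,2,2,1,1,1,0], [1,1,2,2,2,1,0,0]],
  [[0,1,1,2,2,2,1,1], [1,1,1,2,2,1,1,1], [1,1,1,2,2,2,1,0], [1,1,2,2,1,1,1,1], [1,1,2,2,2,1,1,0], [1,1,2,3,2,1,0,0]],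
  [[0,1,1,2,2,2,2,1], [1,1,1,2,2,2,1,1], [1,1,2,2,2,1,1,1], [1,1,2,2,2,2,1,0], [1,1,2,3,2,1,1,0], [1,2,2,3,2,1,0,0]],
  [[1,1,1,2,2,2,2,1], [1,1,2,2,2,2,1,1], [1,1,2,3,2,1,1,1], [1,1,2,3,2,2,1,0], [1,2,2,3,2,1,1,0]],
  [[1,1,2,2,2,2,2,1], [1,1,2,3,2,2,1,1], [1,1,2,3,3,2,1,0], [1,2,2,3,2,1,1,1], [1,2,2,3,2,2,1,0]],
  [[1,1,2,3,2,2,2,1], [1,1,2,3,3,2,1,1], [1,2,2,3,2,2,1,1], [1,2,2,3,3,2,1,0]],
  [[1,1,2,3,3,2,2,1], [1,2,2,3,2,2,2,1], [1,2,2,3,3,2,1,1], [1,2,2,4,3,2,1,0]],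
  [[1,1,2,3,3,3,2,1], [1,2,2,3,3,2,2,1], [1,2,2,4,3,2,1,1], [1,2,3,4,3,2,1,0]],
  [[1,2,2,3,3,3,2,1], [1,2,2,4,3,2,2,1], [1,2,3,4,3,2,1,1], [2,2,3,4,3,2,1,0]],
  [[1,2,2,4,3,3,2,1], [1,2,3,4,3,2,2,1], [2,2,3,4,3,2,1,1]],
  [[1,2,2,4,4,3,2,1], [1,2,3,4,3,3,2,1], [2,2,3,4,3,2,2,1]],
  [[1,2,3,4,4,3,2,1], [2,2,3,4,3,3,2,1]],
  [[1,2,3,5,4,3,2,1], [2,2,3,4,4,3,2,1]],
  [[1,3,3,5,4,3,2,1], [2,2,3,5,4,3,2,1]],
  [[2,2,4,5,4,3,2,1], [2,3,3,5,4,3,2,1]],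
  [[2,3,4,5,4,3,2,1]],
  [[2,3,4,6,4,3,2,1]],
  [[2,3,4,6,5,3,2,1]],
  [[2,3,4,6,5,4,2,1]],
  [[2,3,4,6,5,4,3,1]],
  [[2,3,4,6,5,4,3,2]]]"

definition pos_root_list :: "int list list" where
  "pos_root_list = concat pos_root_table"

definition in_pos_root_table :: "int list \<Rightarrow> bool" where
  "in_pos_root_table c \<longleftrightarrow>
     nat (sum_list c) < length pos_root_table \<and> c \<in> set (pos_root_table ! nat (sum_list c))"

definition unit_coords :: "nat \<Rightarrow> int list" where
  "unit_coords i = map (\<lambda>n. if n = i then 1 else 0) [0..<8]"

definition pairing_coords :: "nat \<Rightarrow> int list \<Rightarrow> int" where
  "pairing_coords i c = sum_list (map (\<lambda>k. c ! k * cartan_table k i) [0..<8])"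

definition sref_coords :: "nat \<Rightarrow> int list \<Rightarrow> int list" where
  "sref_coords i c = c[i := c ! i - pairing_coords i c]"

definition sref_closed_at :: "nat \<Rightarrow> int list \<Rightarrow> bool" where
  "sref_closed_at i c \<longleftrightarrow>
     (if pairing_coords i c = 0 then True
      else if c = unit_coords i then sref_coords i c = map uminus c
      else in_pos_root_table (sref_coords i c))"

lemma pos_root_list_sref_closed:
  "list_all (\<lambda>i. list_all (sref_closed_at i) pos_root_list) [0..<8]"
  by code_simp

lemma pos_root_list_simple: "list_all (\<lambda>i. unit_coords i \<in> set pos_root_list) [0..<8]"
  by code_simp

lemma pos_root_list_nonneg:
  "list_all (\<lambda>c. length c = 8 \<and> list_all (\<lambda>x. x \<ge> 0) c \<and> c \<noteq> replicate 8 0) pos_root_list"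
  by code_simp

definition coords :: "weight \<Rightarrow> int list" where
  "coords \<mu> = map (\<lambda>n. root_coord \<mu> (of_nat n)) [0..<8]"

lemma length_coords [simp]: "length (coords \<mu>) = 8"
  by (simp add: coords_def)

lemma coords_nth: "n < 8 \<Longrightarrow> coords \<mu> ! n = root_coord \<mu> (of_nat n)"
  by (simp add: coords_def)

lemma coords_nth_node: "coords \<mu> ! node k = root_coord \<mu> k"
  using node_less[of k] by (simp add: coords_nth)

lemma inj_coords: "inj coords"
  by (rule injI, rule weight_eqI_root_coord) (metis coords_nth_node)

lemma pairing_coords_coords: "pairing_coords (node i) (coords \<mu>) = \<mu> i"
proof -
  have "pairing_coords (node i) (coords \<mu>) = (\<Sum>k<8. root_coord \<mu> (of_nat k) * cartan (of_nat k) i)"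
    by (simp add: pairing_coords_def sum_list_upt_8 coords_def cartan_eq_table node_of_nat)
  also have "\<dots> = \<mu> i"
    using weight_eq_sum_root_coord[of \<mu> i] by (simp add: sum_UNIV_8)
  finally show ?thesis .
qed

lemma coords_sref: "coords (sref i \<mu>) = sref_coords (node i) (coords \<mu>)"
proof (rule nth_equalityI)
  fix n assume "n < length (coords (sref i \<mu>))"
  then have n: "n < 8" by simp
  then show "coords (sref i \<mu>) ! n = sref_coords (node i) (coords \<mu>) ! n"
    using node_less[of i]
    by (auto simp: coords_nth root_coord_sref sref_coords_def pairing_coords_coords
        eq_of_nat_iff_node nth_list_update)
qed (simp add: sref_coords_def)

lemma coords_uminus: "coords (- \<mu>) = map uminus (coords \<mu>)"
  by (simp add: coords_def)

lemma coords_alpha: "coords (alpha i) = unit_coords (node i)"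
  by (simp add: coords_def unit_coords_def root_coord_alpha eq_of_nat_iff_node)

lemma coords_zero: "coords 0 = replicate 8 0"
  by (simp add: coords_def list_eq_iff_nth_eq)

text \<open>The listed roots and their negatives are closed under the simple reflections (checked by
  evaluation on the table), and contain the simple roots; hence they contain every root
  \<open>w \<alpha>\<^sub>i\<close>.\<close>

definition table_roots :: "weight set" where
  "table_roots = {\<mu>. coords \<mu> \<in> set pos_root_list \<or> coords (- \<mu>) \<in> set pos_root_list}"

lemma sref_listed_in_table_roots:
  assumes c: "coords \<mu> \<in> set pos_root_list"
  shows "sref i \<mu> \<in> table_roots"
proof -
  have "sref_closed_at (node i) (coords \<mu>)"
    using pos_root_list_sref_closed c node_less[of i] by (simp add: list_all_iff)
  moreover have "in_pos_root_table c \<Longrightarrow> c \<in> set pos_root_list" for c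
    unfolding in_pos_root_table_def pos_root_list_def by (auto intro: nth_mem)
  ultimately show ?thesis
    using c by (auto simp: sref_closed_at_def table_roots_def coords_sref coords_uminus sref_coords_def
        split: if_splits)
qed

lemma table_roots_sref: "\<mu> \<in> table_roots \<Longrightarrow> sref i \<mu> \<in> table_roots"
  using sref_listed_in_table_roots[of \<mu>] sref_listed_in_table_roots[of "- \<mu>"]
  by (auto simp: table_roots_def sref_uminus)

lemma alpha_in_table_roots: "alpha i \<in> table_roots"
  using pos_root_list_simple node_less[of i] by (simp add: table_roots_def coords_alpha list_all_iff)

lemma roots_subset_table_roots: "roots \<subseteq> table_roots"
proof -
  have "w (alpha i) \<in> table_roots" if "w \<in> weyl" for w i
    using that by induction (auto simp: alpha_in_table_roots table_roots_sref)
  then show ?thesis unfolding roots_def by blast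
qed

lemma table_root_sign:
  assumes "\<mu> \<in> table_roots"
  shows "(\<forall>k. root_coord \<mu> k \<ge> 0) \<or> (\<forall>k. root_coord \<mu> k \<le> 0)"
proof -
  have nonneg: "root_coord \<nu> k \<ge> 0" if "coords \<nu> \<in> set pos_root_list" for \<nu> k
    using pos_root_list_nonneg that nth_mem[of "node k" "coords \<nu>"] node_less[of k]
    by (auto simp: list_all_iff coords_nth_node)
  show ?thesis
    using assms nonneg[of \<mu>] nonneg[of "- \<mu>"] by (auto simp: table_roots_def)
qed

lemma table_root_nonzero: "\<mu> \<in> table_roots \<Longrightarrow> \<mu> \<noteq> 0"
  using pos_root_list_nonneg by (auto simp: table_roots_def coords_zero list_all_iff)

lemma finite_table_roots: "finite table_roots"
proof -
  have "table_roots \<subseteq> coords -` set pos_root_list \<union> uminus ` (coords -` set pos_root_list)"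
    unfolding table_roots_def by (auto intro: rev_image_eqI[of "- _"])
  moreover have "finite (coords -` set pos_root_list)"
    by (rule finite_vimageI[OF _ inj_coords]) simp
  ultimately show ?thesis by (meson finite_Un finite_imageI finite_subset)
qed

lemma finite_roots: "finite roots"
  using finite_subset[OF roots_subset_table_roots finite_table_roots] .

lemma root_sign: "\<beta> \<in> roots \<Longrightarrow> (\<forall>k. root_coord \<beta> k \<ge> 0) \<or> (\<forall>k. root_coord \<beta> k \<le> 0)"
  using table_root_sign roots_subset_table_roots by blast

lemma root_nonzero: "\<beta> \<in> roots \<Longrightarrow> \<beta> \<noteq> 0"
  using table_root_nonzero roots_subset_table_roots by blast

section \<open>The Weyl group\<close>

fun sref_word :: "8 list \<Rightarrow> weight \<Rightarrow> weight" where
  "sref_word [] = id"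
| "sref_word (i # is) = sref i \<circ> sref_word is"

lemma sref_comp_sref [simp]: "sref i \<circ> sref i = id"
  by (simp add: fun_eq_iff)

lemma sref_word_append: "sref_word (is @ js) = sref_word is \<circ> sref_word js"
  by (induction "is") auto

lemma sref_word_snoc: "sref_word (is @ [j]) = sref_word is \<circ> sref j"
  by (simp add: sref_word_append)

lemma weyl_iff_sref_word: "w \<in> weyl \<longleftrightarrow> (\<exists>is. w = sref_word is)"
proof
  show "w \<in> weyl \<Longrightarrow> \<exists>is. w = sref_word is"
    by (induction rule: weyl.induct) (metis sref_word.simps)+
  have "sref_word is \<in> weyl" for "is"
    by (induction "is") (simp_all only: sref_word.simps weyl.intros)
  then show "\<exists>is. w = sref_word is \<Longrightarrow> w \<in> weyl" by blast
qed

lemma sref_word_in_weyl [simp]: "sref_word is \<in> weyl"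
  using weyl_iff_sref_word by blast

lemma sref_word_rev_inverse [simp]: "sref_word (rev is) (sref_word is \<mu>) = \<mu>"
  by (induction "is" arbitrary: \<mu>) (simp_all add: sref_word_snoc)

lemma sref_word_inverse_rev [simp]: "sref_word is (sref_word (rev is) \<mu>) = \<mu>"
  using sref_word_rev_inverse[of "rev is"] by simp

lemma weyl_comp: "v \<in> weyl \<Longrightarrow> w \<in> weyl \<Longrightarrow> v \<circ> w \<in> weyl"
  by (auto simp: weyl_iff_sref_word sref_word_append[symmetric])

lemma weyl_sref_left: "w \<in> weyl \<Longrightarrow> sref i \<circ> w \<in> weyl"
  by (rule weyl_step)

lemma weyl_sref_right: "w \<in> weyl \<Longrightarrow> w \<circ> sref i \<in> weyl"
  by (auto simp: weyl_iff_sref_word sref_word_snoc[symmetric])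

lemma sref_in_weyl: "sref i \<in> weyl"
  using weyl_sref_left[OF weyl_id] by simp

lemma weyl_add: "w \<in> weyl \<Longrightarrow> w (a + b) = w a + w b"
  by (induction arbitrary: a b rule: weyl.induct) (auto simp: sref_add)

lemma weyl_diff: "w \<in> weyl \<Longrightarrow> w (a - b) = w a - w b"
  by (induction arbitrary: a b rule: weyl.induct) (auto simp: sref_diff)

lemma weyl_uminus: "w \<in> weyl \<Longrightarrow> w (- a) = - w a"
  by (induction arbitrary: a rule: weyl.induct) (auto simp: sref_uminus)

lemma weyl_smul: "w \<in> weyl \<Longrightarrow> w (smul c a) = smul c (w a)"
  by (induction arbitrary: a rule: weyl.induct) (auto simp: sref_smul)

lemma weyl_zero: "w \<in> weyl \<Longrightarrow> w 0 = 0"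
  using weyl_diff[of w 0 0] by simp

lemma weyl_sum: "w \<in> weyl \<Longrightarrow> w (\<Sum>x\<in>A. f x) = (\<Sum>x\<in>A. w (f x))"
  by (induction A rule: infinite_finite_induct) (auto simp: weyl_zero weyl_add)

lemma weyl_pairing: "w \<in> weyl \<Longrightarrow> pairing (w a) (w b) = pairing a b"
  by (induction arbitrary: a b rule: weyl.induct) (auto simp: pairing_sref)

lemma alpha_in_roots: "alpha i \<in> roots"
  unfolding roots_def by (auto intro!: exI[of _ id] weyl_id)

lemma weyl_roots: "w \<in> weyl \<Longrightarrow> \<beta> \<in> roots \<Longrightarrow> w \<beta> \<in> roots"
  unfolding roots_def using weyl_comp by (fastforce intro: exI[of _ "w \<circ> _"])

lemma sref_roots: "\<beta> \<in> roots \<Longrightarrow> sref i \<beta> \<in> roots"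
  using weyl_roots[OF sref_in_weyl] .

lemma roots_uminus: "\<beta> \<in> roots \<Longrightarrow> - \<beta> \<in> roots"
proof -
  assume "\<beta> \<in> roots"
  then obtain v i where v: "v \<in> weyl" "\<beta> = v (alpha i)" unfolding roots_def by blast
  then have "- \<beta> = (v \<circ> sref i) (alpha i)" by (simp add: sref_alpha weyl_uminus fun_eq_iff)
  then show ?thesis unfolding roots_def using weyl_sref_right[OF v(1)] by blast
qed

lemma pairing_root_self: "\<beta> \<in> roots \<Longrightarrow> pairing \<beta> \<beta> = 2"
  unfolding roots_def by (auto simp: weyl_pairing)

lemma pos_roots_iff: "\<beta> \<in> pos_roots \<longleftrightarrow> \<beta> \<in> roots \<and> (\<forall>k. root_coord \<beta> k \<ge> 0)"
  by (simp add: pos_roots_def rootcoef_eq_root_coord)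

lemma finite_pos_roots: "finite pos_roots"
  using finite_roots by (simp add: pos_roots_def)

lemma pos_roots_roots: "\<beta> \<in> pos_roots \<Longrightarrow> \<beta> \<in> roots"
  by (simp add: pos_roots_iff)

lemma alpha_in_pos_roots: "alpha i \<in> pos_roots"
  by (simp add: pos_roots_iff alpha_in_roots root_coord_alpha)

lemma pos_roots_uminus: "\<beta> \<in> pos_roots \<Longrightarrow> - \<beta> \<notin> pos_roots"
proof
  assume "\<beta> \<in> pos_roots" "- \<beta> \<in> pos_roots"
  then have "root_coord \<beta> k = root_coord 0 k" for k
    by (auto simp: pos_roots_iff intro: order_antisym)
  then have "\<beta> = 0" by (rule weight_eqI_root_coord)
  then show False using \<open>\<beta> \<in> pos_roots\<close> root_nonzero pos_roots_roots by blast
qed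

lemma not_pos_root_iff: "\<beta> \<in> roots \<Longrightarrow> \<beta> \<notin> pos_roots \<longleftrightarrow> - \<beta> \<in> pos_roots"
  using root_sign[of \<beta>] roots_uminus[of \<beta>] pos_roots_uminus[of "- \<beta>"]
  by (auto simp: pos_roots_iff)

text \<open>A positive root other than \<open>\<alpha>\<^sub>i\<close> has a positive coordinate off \<open>i\<close>, which \<open>s\<^sub>i\<close> leaves unchanged.\<close>

lemma sref_pos_root:
  assumes \<beta>: "\<beta> \<in> pos_roots" and ne: "\<beta> \<noteq> alpha i"
  shows "sref i \<beta> \<in> pos_roots"
proof (cases "\<exists>k. k \<noteq> i \<and> root_coord \<beta> k > 0")
  case True
  then obtain k where "k \<noteq> i" "root_coord \<beta> k > 0" by blast
  then have "root_coord (sref i \<beta>) k > 0" by (simp add: root_coord_sref)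
  moreover have "sref i \<beta> \<in> roots" using \<beta> sref_roots pos_roots_roots by blast
  ultimately have "\<forall>k. root_coord (sref i \<beta>) k \<ge> 0"
    using root_sign[of "sref i \<beta>"] by (meson not_le)
  with \<open>sref i \<beta> \<in> roots\<close> show ?thesis by (simp add: pos_roots_iff)
next
  case False
  have "root_coord \<beta> k = 0" if "k \<noteq> i" for k
    using False that \<beta> unfolding pos_roots_iff by (meson order_antisym not_less)
  then have \<beta>_eq: "\<beta> = smul (root_coord \<beta> i) (alpha i)"
    by (intro weight_eqI_root_coord) (auto simp: root_coord_alpha)
  have "2 = pairing \<beta> \<beta>" using pairing_root_self pos_roots_roots[OF \<beta>] by simp
  also have "\<dots> = root_coord \<beta> i * root_coord \<beta> i * 2"
    by (subst (1 2) \<beta>_eq) (simp add: pairing_smul_left pairing_smul_right smul_alpha_self)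
  finally have "root_coord \<beta> i * root_coord \<beta> i = 1" by simp
  moreover have "root_coord \<beta> i \<ge> 0" using \<beta> by (simp add: pos_roots_iff)
  ultimately have "root_coord \<beta> i = 1" by (auto simp: zmult_eq_1_iff)
  then show ?thesis using \<beta>_eq ne by (simp add: smul_def fun_eq_iff)
qed

lemma image_sref_eq_vimage: "sref i ` A = sref i -` A"
  by (auto simp: image_iff) (metis sref_sref)

lemma sref_permutes_pos_roots_minus: "sref i ` (pos_roots - {alpha i}) = pos_roots - {alpha i}"
proof -
  have *: "sref i \<beta> \<in> pos_roots - {alpha i}" if \<beta>: "\<beta> \<in> pos_roots - {alpha i}" for \<beta>
  proof -
    have "\<beta> \<noteq> - alpha i" using \<beta> pos_roots_uminus[OF alpha_in_pos_roots] by blast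
    then show ?thesis using \<beta> sref_pos_root[of \<beta> i] by (simp add: sref_eq_alpha_iff)
  qed
  show ?thesis
  proof
    show "sref i ` (pos_roots - {alpha i}) \<subseteq> pos_roots - {alpha i}"
      by (intro image_subsetI *)
    show "pos_roots - {alpha i} \<subseteq> sref i ` (pos_roots - {alpha i})"
    proof
      fix \<beta> assume "\<beta> \<in> pos_roots - {alpha i}"
      then have "sref i (sref i \<beta>) \<in> sref i ` (pos_roots - {alpha i})" by (rule imageI[OF *])
      then show "\<beta> \<in> sref i ` (pos_roots - {alpha i})" by simp
    qed
  qed
qed

definition reflection :: "weight \<Rightarrow> weight \<Rightarrow> weight" where
  "reflection \<beta> \<mu> = \<mu> - smul (pairing \<mu> \<beta>) \<beta>"

lemma reflection_alpha: "reflection (alpha i) = sref i"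
  by (simp add: fun_eq_iff reflection_def sref_eq)

lemma weyl_comp_reflection: "w \<in> weyl \<Longrightarrow> w \<circ> reflection \<beta> = reflection (w \<beta>) \<circ> w"
  by (simp add: fun_eq_iff reflection_def weyl_diff weyl_smul weyl_pairing)

text \<open>If the last letter of a word is sent to a negative root, it cancels against an earlier
  letter: this is the exchange condition.\<close>

lemma sref_word_snoc_shorter:
  "sref_word is (alpha j) \<notin> pos_roots \<Longrightarrow>
     \<exists>ks. length ks + 1 = length is \<and> sref_word is \<circ> sref j = sref_word ks"
proof (induction "is")
  case Nil
  then show ?case using alpha_in_pos_roots by simp
next
  case (Cons i "is")
  show ?case
  proof (cases "sref_word is (alpha j) \<in> pos_roots")
    case False
    then obtain ks where ks: "length ks + 1 = length is" "sref_word is \<circ> sref j = sref_word ks"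
      using Cons.IH by blast
    show ?thesis
    proof (intro exI conjI)
      show "length (i # ks) + 1 = length (i # is)" using ks(1) by simp
      show "sref_word (i # is) \<circ> sref j = sref_word (i # ks)"
        by (simp only: sref_word.simps comp_assoc ks(2))
    qed
  next
    case True
    with Cons.prems have "sref_word is (alpha j) = alpha i"
      using sref_pos_root by fastforce
    then have "sref_word is \<circ> sref j = sref i \<circ> sref_word is"
      using weyl_comp_reflection[of "sref_word is" "alpha j"] by (simp add: reflection_alpha)
    then have "sref_word (i # is) \<circ> sref j = sref_word is \<circ> sref j \<circ> sref j"
      by (simp add: comp_assoc)
    also have "\<dots> = sref_word is"
      by (simp add: comp_assoc)
    finally have "sref_word (i # is) \<circ> sref j = sref_word is" .
    then show ?thesis by (metis length_Cons Suc_eq_plus1)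
  qed
qed

definition reduced_word :: "8 list \<Rightarrow> bool" where
  "reduced_word is \<longleftrightarrow> (\<forall>js. sref_word js = sref_word is \<longrightarrow> length is \<le> length js)"

lemma exists_reduced_word: "\<exists>js. sref_word js = sref_word is \<and> reduced_word js"
  using ex_has_least_nat[of "\<lambda>js. sref_word js = sref_word is" "is" length]
  unfolding reduced_word_def by metis

lemma reduced_word_snoc:
  assumes "reduced_word (is @ [j])"
  shows "reduced_word is" and "sref_word is (alpha j) \<in> pos_roots"
proof -
  show "reduced_word is"
    unfolding reduced_word_def
  proof (intro allI impI)
    fix js assume "sref_word js = sref_word is"
    then have "sref_word (js @ [j]) = sref_word (is @ [j])" by (simp add: sref_word_snoc)
    then show "length is \<le> length js" using assms unfolding reduced_word_def by fastforce
  qed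
  show "sref_word is (alpha j) \<in> pos_roots"
  proof (rule ccontr)
    assume "sref_word is (alpha j) \<notin> pos_roots"
    then obtain ks where "length ks + 1 = length is" "sref_word (is @ [j]) = sref_word ks"
      using sref_word_snoc_shorter by (fastforce simp: sref_word_snoc)
    then show False using assms unfolding reduced_word_def by fastforce
  qed
qed

lemma weyl_preserving_pos_roots_eq_id:
  assumes w: "w \<in> weyl" and pos: "\<And>\<beta>. \<beta> \<in> pos_roots \<Longrightarrow> w \<beta> \<in> pos_roots"
  shows "w = id"
proof -
  obtain "is" where is_w: "w = sref_word is" and red: "reduced_word is"
    using w exists_reduced_word by (metis weyl_iff_sref_word)
  show ?thesis
  proof (cases "is" rule: rev_cases)
    case Nil
    then show ?thesis using is_w by simp
  next
    case (snoc js j)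
    then have "sref_word js (alpha j) \<in> pos_roots" using reduced_word_snoc red by blast
    moreover have "w (alpha j) = - sref_word js (alpha j)"
      using is_w snoc by (simp add: sref_word_snoc sref_alpha weyl_uminus fun_eq_iff)
    ultimately have "w (alpha j) \<notin> pos_roots" using pos_roots_uminus by simp
    then show ?thesis using pos[OF alpha_in_pos_roots] by blast
  qed
qed

definition dominant :: "weight \<Rightarrow> bool" where
  "dominant \<mu> \<longleftrightarrow> (\<forall>i. \<mu> i \<ge> 0)"

definition strictly_dominant :: "weight \<Rightarrow> bool" where
  "strictly_dominant \<mu> \<longleftrightarrow> (\<forall>i. \<mu> i > 0)"

definition root_le :: "weight \<Rightarrow> weight \<Rightarrow> bool" where
  "root_le \<mu> \<nu> \<longleftrightarrow> (\<forall>k. root_coord \<mu> k \<le> root_coord \<nu> k)"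

lemma strictly_dominant_dominant: "strictly_dominant \<mu> \<Longrightarrow> dominant \<mu>"
  by (simp add: strictly_dominant_def dominant_def less_imp_le)

lemma pairing_strictly_dominant_pos_root:
  assumes \<mu>: "strictly_dominant \<mu>" and \<beta>: "\<beta> \<in> pos_roots"
  shows "pairing \<mu> \<beta> > 0"
proof -
  have nonneg: "\<forall>k. root_coord \<beta> k \<ge> 0" using \<beta> by (simp add: pos_roots_iff)
  obtain k where "root_coord \<beta> k \<noteq> 0"
    using \<beta> root_nonzero[OF pos_roots_roots] weight_eqI_root_coord[of \<beta> 0] by auto
  then have "root_coord \<beta> k * \<mu> k > 0"
    using nonneg \<mu> by (simp add: strictly_dominant_def order_neq_le_trans)
  moreover have "\<forall>k. root_coord \<beta> k * \<mu> k \<ge> 0"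
    using nonneg \<mu> by (simp add: strictly_dominant_def less_imp_le)
  ultimately show ?thesis
    unfolding pairing_def by (intro sum_pos2[where i = k]) auto
qed

lemma weyl_fixing_strictly_dominant_eq_id:
  assumes \<mu>: "strictly_dominant \<mu>" and w: "w \<in> weyl" and fixed: "w \<mu> = \<mu>"
  shows "w = id"
proof (rule weyl_preserving_pos_roots_eq_id[OF w], rule ccontr)
  fix \<beta> assume \<beta>: "\<beta> \<in> pos_roots" and "w \<beta> \<notin> pos_roots"
  then have "- w \<beta> \<in> pos_roots"
    using not_pos_root_iff weyl_roots[OF w pos_roots_roots] by blast
  then have "pairing \<mu> (w \<beta>) < 0"
    using pairing_strictly_dominant_pos_root[OF \<mu>] by (fastforce simp: pairing_uminus_right)
  moreover have "pairing \<mu> (w \<beta>) = pairing \<mu> \<beta>"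
    using weyl_pairing[OF w, of \<mu> \<beta>] fixed by simp
  ultimately show False
    using pairing_strictly_dominant_pos_root[OF \<mu> \<beta>] by simp
qed

lemma weyl_eq_on_strictly_dominant:
  assumes \<mu>: "strictly_dominant \<mu>" and "v \<in> weyl" "w \<in> weyl" and eq: "v \<mu> = w \<mu>"
  shows "v = w"
proof -
  obtain "is" where w: "w = sref_word is" using \<open>w \<in> weyl\<close> weyl_iff_sref_word by blast
  have "(sref_word (rev is) \<circ> v) \<mu> = \<mu>"
    using eq w by simp
  then have "sref_word (rev is) \<circ> v = id"
    using \<mu> \<open>v \<in> weyl\<close> by (intro weyl_fixing_strictly_dominant_eq_id) (simp_all add: weyl_comp)
  then have "sref_word is \<circ> (sref_word (rev is) \<circ> v) = w" using w by simp
  then show "v = w" by (simp add: fun_eq_iff comp_def)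
qed

lemma weyl_root_le_dominant:
  assumes \<mu>: "dominant \<mu>" and "w \<in> weyl"
  shows "root_le (w \<mu>) \<mu>"
proof -
  have "root_le (sref_word is \<mu>) \<mu>" if "reduced_word is" for "is"
    using that
  proof (induction "is" rule: rev_induct)
    case (snoc j "is")
    then have IH: "root_le (sref_word is \<mu>) \<mu>" and "sref_word is (alpha j) \<in> pos_roots"
      using reduced_word_snoc by blast+
    have "\<mu> j * root_coord (sref_word is (alpha j)) k \<ge> 0" for k
      using \<mu> \<open>sref_word is (alpha j) \<in> pos_roots\<close> by (simp add: dominant_def pos_roots_iff)
    moreover have "sref_word (is @ [j]) \<mu> = sref_word is \<mu> - smul (\<mu> j) (sref_word is (alpha j))"
      by (simp add: sref_word_snoc sref_eq weyl_diff weyl_smul fun_eq_iff)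
    then have "root_coord (sref_word (is @ [j]) \<mu>) k
        = root_coord (sref_word is \<mu>) k - \<mu> j * root_coord (sref_word is (alpha j)) k" for k
      by simp
    ultimately show ?case
      using IH by (simp add: root_le_def) (smt (verit))
  qed (simp add: root_le_def)
  then show ?thesis
    using \<open>w \<in> weyl\<close> exists_reduced_word weyl_iff_sref_word by metis
qed

lemma card_inversions_split:
  "card {\<beta> \<in> pos_roots. v \<beta> \<notin> pos_roots}
     = card {\<beta> \<in> pos_roots - {alpha j}. v \<beta> \<notin> pos_roots} + (if v (alpha j) \<in> pos_roots then 0 else 1)"
proof -
  have "{\<beta> \<in> pos_roots. v \<beta> \<notin> pos_roots}
      = {\<beta> \<in> pos_roots - {alpha j}. v \<beta> \<notin> pos_roots} \<union> (if v (alpha j) \<in> pos_roots then {} else {alpha j})"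
    using alpha_in_pos_roots[of j] by auto
  then show ?thesis using finite_pos_roots by simp
qed

text \<open>\<open>s\<^sub>j\<close> permutes the positive roots other than \<open>\<alpha>\<^sub>j\<close> and negates \<open>\<alpha>\<^sub>j\<close>, so right
  multiplication by \<open>s\<^sub>j\<close> changes the number of inversions by one.\<close>

lemma wsign_sref_right:
  assumes w: "w \<in> weyl"
  shows "wsign (w \<circ> sref j) = - wsign w"
proof -
  let ?Q = "pos_roots - {alpha j}"
  have "sref j -` ?Q = ?Q"
    using sref_permutes_pos_roots_minus[of j] by (simp add: image_sref_eq_vimage)
  then have "{\<beta> \<in> ?Q. w (sref j \<beta>) \<notin> pos_roots} = sref j -` {\<beta> \<in> ?Q. w \<beta> \<notin> pos_roots}"
    by blast
  then have "{\<beta> \<in> ?Q. w (sref j \<beta>) \<notin> pos_roots} = sref j ` {\<beta> \<in> ?Q. w \<beta> \<notin> pos_roots}"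
    by (simp add: image_sref_eq_vimage)
  then have Q: "card {\<beta> \<in> ?Q. (w \<circ> sref j) \<beta> \<notin> pos_roots} = card {\<beta> \<in> ?Q. w \<beta> \<notin> pos_roots}"
    by (simp add: card_image inj_on_subset[OF inj_sref])
  have "w (alpha j) \<in> roots" by (rule weyl_roots[OF w alpha_in_roots])
  then have "(w \<circ> sref j) (alpha j) \<in> pos_roots \<longleftrightarrow> w (alpha j) \<notin> pos_roots"
    by (simp add: sref_alpha weyl_uminus[OF w] not_pos_root_iff)
  then show ?thesis
    unfolding wsign_def card_inversions_split[of "w \<circ> sref j" j] card_inversions_split[of w j] Q
    by auto
qed

lemma wsign_sref_word: "wsign (sref_word is) = (-1) ^ length is"
proof (induction "is" rule: rev_induct)
  case Nil
  then show ?case by (simp add: wsign_def)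
next
  case (snoc j "is")
  then show ?case by (simp only: sref_word_snoc wsign_sref_right[OF sref_word_in_weyl]) simp
qed

lemma wsign_id: "wsign id = 1"
  using wsign_sref_word[of "[]"] by simp

lemma wsign_sref_left: "w \<in> weyl \<Longrightarrow> wsign (sref i \<circ> w) = - wsign w"
  by (auto simp: weyl_iff_sref_word wsign_sref_word simp flip: sref_word.simps)

lemma finite_weyl: "finite weyl"
proof -
  let ?f = "\<lambda>w. map (\<lambda>n. w (alpha (of_nat n))) [0..<8]"
  have "inj_on ?f weyl"
  proof (rule inj_onI)
    fix v w assume "v \<in> weyl" "w \<in> weyl" and eq: "?f v = ?f w"
    have "v (alpha i) = w (alpha i)" for i
      using arg_cong[OF eq, of "\<lambda>xs. xs ! node i"] node_less[of i] by simp
    then have "v \<mu> = w \<mu>" for \<mu>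
      using \<open>v \<in> weyl\<close> \<open>w \<in> weyl\<close>
      by (subst (1 2) weight_eq_sum_alpha) (simp add: weyl_sum weyl_smul)
    then show "v = w" by (rule ext)
  qed
  moreover have "?f ` weyl \<subseteq> {xs. set xs \<subseteq> roots \<and> length xs = 8}"
    using weyl_roots[OF _ alpha_in_roots] by auto
  then have "finite (?f ` weyl)"
    by (rule finite_subset) (rule finite_lists_length_eq[OF finite_roots])
  ultimately show ?thesis by (rule finite_imageD[rotated])
qed

lemma sum_pos_roots: "(\<Sum>\<beta>\<in>pos_roots. \<beta>) = smul 2 rho"
proof
  fix i
  let ?s = "\<Sum>\<beta>\<in>pos_roots. \<beta>"
  let ?Q = "pos_roots - {alpha i}"
  have "sref i ?s = (\<Sum>\<beta>\<in>pos_roots. sref i \<beta>)"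
    by (rule weyl_sum[OF sref_in_weyl])
  also have "\<dots> = (\<Sum>\<beta>\<in>?Q. sref i \<beta>) + sref i (alpha i)"
    using finite_pos_roots alpha_in_pos_roots by (simp add: sum.remove add.commute)
  also have "(\<Sum>\<beta>\<in>?Q. sref i \<beta>) = (\<Sum>\<beta>\<in>sref i ` ?Q. \<beta>)"
    by (simp add: sum.reindex inj_on_subset[OF inj_sref])
  also have "\<dots> = (\<Sum>\<beta>\<in>?Q. \<beta>)"
    by (simp only: sref_permutes_pos_roots_minus)
  also have "\<dots> = ?s - alpha i"
    using finite_pos_roots alpha_in_pos_roots by (simp add: sum_diff1)
  finally have "sref i ?s i = (?s - alpha i + sref i (alpha i)) i" by simp
  then show "?s i = smul 2 rho i"
    by (simp add: sref_def sref_alpha smul_def rho_def)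
qed

section \<open>The group ring of the weight lattice\<close>

lemma obtain_max_image:
  fixes f :: "'a \<Rightarrow> 'b::linorder"
  assumes "finite A" "A \<noteq> {}"
  obtains a where "a \<in> A" "\<And>b. b \<in> A \<Longrightarrow> f b \<le> f a"
proof -
  have "Max (f ` A) \<in> f ` A" using assms by simp
  then obtain a where "a \<in> A" "f a = Max (f ` A)" by (metis imageE)
  then show thesis using assms by (intro that) (auto intro: Max_ge)
qed

lemma lookup_mult_keys:
  fixes f g :: "'a::ab_group_add \<Rightarrow>\<^sub>0 'b::comm_semiring_0"
  shows "Poly_Mapping.lookup (f * g) k
    = (\<Sum>l\<in>Poly_Mapping.keys f. Poly_Mapping.lookup f l * Poly_Mapping.lookup g (k - l))"
proof -
  have "(\<Sum>q. Poly_Mapping.lookup g q when k = l + q) = Poly_Mapping.lookup g (k - l)" for l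
  proof -
    have "(\<lambda>q. Poly_Mapping.lookup g q when k = l + q)
        = (\<lambda>q. if q = k - l then Poly_Mapping.lookup g q else 0)"
      by (auto simp: when_def algebra_simps)
    then show ?thesis by (simp only: Sum_any.delta)
  qed
  then have "Poly_Mapping.lookup (f * g) k
      = (\<Sum>l. Poly_Mapping.lookup f l * Poly_Mapping.lookup g (k - l))"
    by (simp add: lookup_mult)
  also have "\<dots> = (\<Sum>l\<in>Poly_Mapping.keys f. Poly_Mapping.lookup f l * Poly_Mapping.lookup g (k - l))"
    by (rule Sum_any.expand_superset) (auto simp: in_keys_iff)
  finally show ?thesis .
qed

lemma lookup_of_int_mult:
  fixes p :: "'a::monoid_add \<Rightarrow>\<^sub>0 'b::comm_ring_1"
  shows "Poly_Mapping.lookup (of_int c * p) k = of_int c * Poly_Mapping.lookup p k"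
proof -
  have "of_int c * p = Poly_Mapping.map ((*) (of_int c)) p"
    by (simp add: mult_map_scale_conv_mult)
  then show ?thesis
    by (simp add: Poly_Mapping.map.rep_eq when_def)
qed

abbreviation coeff :: "grpring \<Rightarrow> weight \<Rightarrow> int" where
  "coeff \<equiv> Poly_Mapping.lookup"

lemma coeff_ex: "coeff (ex \<mu>) \<nu> = (if \<mu> = \<nu> then 1 else 0)"
  by (simp add: ex_def lookup_single when_def)

lemma coeff_of_int_mult_ex: "coeff (of_int c * ex \<mu>) \<nu> = (if \<mu> = \<nu> then c else 0)"
  by (simp add: lookup_of_int_mult coeff_ex)

definition height :: "weight \<Rightarrow> int" where
  "height \<mu> = (\<Sum>k\<in>UNIV. root_coord \<mu> k)"

lemma root_le_refl [simp]: "root_le \<mu> \<mu>"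
  by (simp add: root_le_def)

lemma root_le_trans: "root_le a b \<Longrightarrow> root_le b c \<Longrightarrow> root_le a c"
  by (auto simp: root_le_def intro: order_trans)

lemma root_le_antisym: "root_le a b \<Longrightarrow> root_le b a \<Longrightarrow> a = b"
  by (rule weight_eqI_root_coord) (auto simp: root_le_def intro: order_antisym)

lemma root_le_add: "root_le a b \<Longrightarrow> root_le c d \<Longrightarrow> root_le (a + c) (b + d)"
  by (auto simp: root_le_def intro: add_mono)

lemma root_le_height: "root_le a b \<Longrightarrow> height a \<le> height b"
  unfolding root_le_def height_def by (rule sum_mono) simp

lemma root_le_height_eq:
  assumes "root_le a b" and "height a = height b"
  shows "a = b"
proof (rule weight_eqI_root_coord)
  have "(\<Sum>k\<in>UNIV. root_coord b k - root_coord a k) = 0"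
    using assms(2) by (simp add: height_def sum_subtractf)
  then have "\<forall>k\<in>UNIV. root_coord b k - root_coord a k = 0"
    using assms(1) by (subst (asm) sum_nonneg_eq_0_iff) (auto simp: root_le_def)
  then show "root_coord a k = root_coord b k" for k by simp
qed

lemma root_le_height_less: "root_le a b \<Longrightarrow> a \<noteq> b \<Longrightarrow> height a < height b"
  using root_le_height root_le_height_eq by fastforce

lemma dominant_height_nonneg: "dominant \<mu> \<Longrightarrow> height \<mu> \<ge> 0"
  unfolding height_def root_coord_def dominant_def
  by (intro sum_nonneg mult_nonneg_nonneg) (simp_all add: inverse_cartan_nonneg)

lemma height_sref: "height (sref i \<mu>) = height \<mu> - \<mu> i"
  by (simp add: height_def root_coord_sref sum_subtractf)

definition unitriangular :: "grpring \<Rightarrow> weight \<Rightarrow> bool" where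
  "unitriangular f \<mu> \<longleftrightarrow> (\<forall>\<nu>. coeff f \<nu> \<noteq> 0 \<longrightarrow> root_le \<nu> \<mu>) \<and> coeff f \<mu> = 1"

lemma unitriangular_coeff_eq_0: "unitriangular f \<mu> \<Longrightarrow> \<not> root_le \<nu> \<mu> \<Longrightarrow> coeff f \<nu> = 0"
  unfolding unitriangular_def by blast

lemma coeff_mult_top:
  assumes g: "unitriangular g \<mu>"
    and top: "\<And>l. l \<in> Poly_Mapping.keys f \<Longrightarrow> root_le \<nu> l \<Longrightarrow> l = \<nu>"
  shows "coeff (f * g) (\<nu> + \<mu>) = coeff f \<nu>"
proof -
  have *: "coeff f l * coeff g (\<nu> + \<mu> - l) = (if l = \<nu> then coeff f \<nu> else 0)"
    if "l \<in> Poly_Mapping.keys f" for l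
  proof (cases "root_le (\<nu> + \<mu> - l) \<mu>")
    case True
    then have "l = \<nu>" using top that by (auto simp: root_le_def)
    then show ?thesis using g by (simp add: unitriangular_def)
  next
    case False
    then show ?thesis using g that top[of l] unitriangular_coeff_eq_0 by auto
  qed
  have "coeff (f * g) (\<nu> + \<mu>) = (\<Sum>l\<in>Poly_Mapping.keys f. if l = \<nu> then coeff f \<nu> else 0)"
    unfolding lookup_mult_keys by (rule sum.cong[OF refl *])
  then show ?thesis by (simp add: in_keys_iff)
qed

lemma unitriangular_mult:
  assumes f: "unitriangular f \<mu>" and g: "unitriangular g \<nu>"
  shows "unitriangular (f * g) (\<mu> + \<nu>)"
  unfolding unitriangular_def
proof (intro conjI allI impI)
  fix \<kappa> assume "coeff (f * g) \<kappa> \<noteq> 0"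
  then obtain l where "coeff f l * coeff g (\<kappa> - l) \<noteq> 0"
    unfolding lookup_mult_keys by (rule sum.not_neutral_contains_not_neutral)
  then have "root_le (l + (\<kappa> - l)) (\<mu> + \<nu>)"
    using f g by (intro root_le_add) (auto simp: unitriangular_def)
  then show "root_le \<kappa> (\<mu> + \<nu>)" by simp
next
  have "l = \<mu>" if "l \<in> Poly_Mapping.keys f" "root_le \<mu> l" for l
    using f that by (simp add: unitriangular_def in_keys_iff root_le_antisym)
  then have "coeff (f * g) (\<mu> + \<nu>) = coeff f \<mu>"
    by (rule coeff_mult_top[OF g])
  then show "coeff (f * g) (\<mu> + \<nu>) = 1" using f by (simp add: unitriangular_def)
qed

lemma unitriangular_one: "unitriangular 1 0"
  by (simp add: unitriangular_def lookup_one when_def)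

lemma unitriangular_power: "unitriangular f \<mu> \<Longrightarrow> unitriangular (f ^ n) (smul (int n) \<mu>)"
proof (induction n)
  case 0
  then show ?case using unitriangular_one by (simp add: smul_def zero_fun_def)
next
  case (Suc n)
  then have "unitriangular (f * f ^ n) (\<mu> + smul (int n) \<mu>)" by (intro unitriangular_mult)
  moreover have "\<mu> + smul (int n) \<mu> = smul (int (Suc n)) \<mu>" by (simp add: smul_def fun_eq_iff algebra_simps)
  ultimately show ?case by simp
qed

lemma unitriangular_prod:
  "finite I \<Longrightarrow> (\<And>i. i \<in> I \<Longrightarrow> unitriangular (f i) (\<mu> i))
     \<Longrightarrow> unitriangular (\<Prod>i\<in>I. f i) (\<Sum>i\<in>I. \<mu> i)"
  by (induction I rule: finite_induct) (simp_all add: unitriangular_one unitriangular_mult)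

section \<open>Alternants and the Weyl character formula\<close>

lemma coeff_alt: "coeff (alt \<mu>) \<nu> = (\<Sum>w\<in>weyl. if w \<mu> = \<nu> then wsign w else 0)"
  by (simp add: alt_def lookup_sum coeff_of_int_mult_ex)

lemma coeff_alt_weyl:
  assumes \<mu>: "strictly_dominant \<mu>" and w: "w \<in> weyl"
  shows "coeff (alt \<mu>) (w \<mu>) = wsign w"
proof -
  have "v \<mu> = w \<mu> \<longleftrightarrow> v = w" if "v \<in> weyl" for v
    using weyl_eq_on_strictly_dominant[OF \<mu> that w] by auto
  then have "(\<Sum>v\<in>weyl. if v \<mu> = w \<mu> then wsign v else 0) = (\<Sum>v\<in>weyl. if v = w then wsign v else 0)"
    by (intro sum.cong) simp_all
  then show ?thesis using w finite_weyl by (simp add: coeff_alt)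
qed

lemma coeff_alt_self: "strictly_dominant \<mu> \<Longrightarrow> coeff (alt \<mu>) \<mu> = 1"
  using coeff_alt_weyl[OF _ weyl_id] wsign_id by simp

lemma coeff_alt_nonzero:
  assumes "coeff (alt \<mu>) \<nu> \<noteq> 0"
  shows "\<exists>w\<in>weyl. \<nu> = w \<mu>"
proof (rule ccontr)
  assume "\<not> (\<exists>w\<in>weyl. \<nu> = w \<mu>)"
  then have "coeff (alt \<mu>) \<nu> = 0" unfolding coeff_alt by (intro sum.neutral) auto
  then show False using assms by simp
qed

lemma unitriangular_alt: "strictly_dominant \<mu> \<Longrightarrow> unitriangular (alt \<mu>) \<mu>"
  unfolding unitriangular_def
  using coeff_alt_self coeff_alt_nonzero weyl_root_le_dominant strictly_dominant_dominant by blast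

definition anti_invariant :: "grpring \<Rightarrow> bool" where
  "anti_invariant h \<longleftrightarrow> (\<forall>i \<nu>. coeff h (sref i \<nu>) = - coeff h \<nu>)"

definition sref_invariant :: "grpring \<Rightarrow> bool" where
  "sref_invariant f \<longleftrightarrow> (\<forall>i \<nu>. coeff f (sref i \<nu>) = coeff f \<nu>)"

lemma bij_betw_sref_comp_weyl: "bij_betw ((\<circ>) (sref i)) weyl weyl"
  by (rule bij_betw_byWitness[where f' = "(\<circ>) (sref i)"])
    (auto simp: comp_assoc[symmetric] weyl_sref_left)

lemma anti_invariant_alt: "anti_invariant (alt \<mu>)"
  unfolding anti_invariant_def
proof (intro allI)
  fix i \<nu>
  have "coeff (alt \<mu>) (sref i \<nu>) = (\<Sum>u\<in>weyl. if sref i (u \<mu>) = sref i \<nu> then wsign (sref i \<circ> u) else 0)"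
    unfolding coeff_alt by (subst sum.reindex_bij_betw[OF bij_betw_sref_comp_weyl, symmetric]) simp
  also have "\<dots> = (\<Sum>u\<in>weyl. - (if u \<mu> = \<nu> then wsign u else 0))"
    by (intro sum.cong) (auto simp: wsign_sref_left inj_eq[OF inj_sref])
  finally show "coeff (alt \<mu>) (sref i \<nu>) = - coeff (alt \<mu>) \<nu>"
    by (simp add: coeff_alt sum_negf)
qed

lemma anti_invariant_coeff_sref_word:
  "anti_invariant h \<Longrightarrow> coeff h (sref_word is \<nu>) = (-1) ^ length is * coeff h \<nu>"
  by (induction "is") (simp_all add: anti_invariant_def)

lemma anti_invariant_coeff_weyl:
  "anti_invariant h \<Longrightarrow> w \<in> weyl \<Longrightarrow> coeff h (w \<nu>) = wsign w * coeff h \<nu>"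
  by (auto simp: weyl_iff_sref_word anti_invariant_coeff_sref_word wsign_sref_word)

lemma anti_invariant_diff: "anti_invariant a \<Longrightarrow> anti_invariant b \<Longrightarrow> anti_invariant (a - b)"
  by (simp add: anti_invariant_def lookup_minus)

lemma anti_invariant_of_int_mult: "anti_invariant a \<Longrightarrow> anti_invariant (of_int c * a)"
  by (simp add: anti_invariant_def lookup_of_int_mult)

lemma sref_invariant_mult_anti_invariant:
  assumes f: "sref_invariant f" and g: "anti_invariant g"
  shows "anti_invariant (f * g)"
  unfolding anti_invariant_def
proof (intro allI)
  fix i \<kappa>
  let ?K = "Poly_Mapping.keys f"
  have "sref i ` ?K = ?K"
    using f unfolding image_sref_eq_vimage by (auto simp: sref_invariant_def in_keys_iff)
  then have "coeff (f * g) (sref i \<kappa>) = (\<Sum>l\<in>?K. coeff f (sref i l) * coeff g (sref i \<kappa> - sref i l))"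
    unfolding lookup_mult_keys
    by (metis (no_types, lifting) inj_on_subset[OF inj_sref subset_UNIV] sum.reindex_cong)
  also have "\<dots> = - coeff (f * g) \<kappa>"
    using f g by (simp add: lookup_mult_keys sum_negf sref_invariant_def anti_invariant_def
        flip: sref_diff)
  finally show "coeff (f * g) (sref i \<kappa>) = - coeff (f * g) \<kappa>" .
qed

text \<open>If \<open>\<mu> i < 0\<close> then \<open>s\<^sub>i \<mu>\<close> is a monomial of larger height; if \<open>\<mu> i = 0\<close> then
  \<open>s\<^sub>i \<mu> = \<mu>\<close> and anti-invariance forces the coefficient of \<open>\<mu>\<close> to vanish.\<close>

lemma anti_invariant_top_strictly_dominant:
  assumes h: "anti_invariant h" and \<mu>: "\<mu> \<in> Poly_Mapping.keys h"
    and top: "\<And>\<nu>. \<nu> \<in> Poly_Mapping.keys h \<Longrightarrow> height \<nu> \<le> height \<mu>"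
  shows "strictly_dominant \<mu>"
  unfolding strictly_dominant_def
proof (rule allI, rule ccontr)
  fix i assume "\<not> \<mu> i > 0"
  have coeff_sref: "coeff h (sref i \<mu>) = - coeff h \<mu>" using h by (simp add: anti_invariant_def)
  have "coeff h \<mu> \<noteq> 0" using \<mu> by (simp add: in_keys_iff)
  show False
  proof (cases "\<mu> i = 0")
    case True
    then have "sref i \<mu> = \<mu>" by (simp add: sref_def)
    then show False using coeff_sref \<open>coeff h \<mu> \<noteq> 0\<close> by simp
  next
    case False
    then have "sref i \<mu> \<in> Poly_Mapping.keys h" using coeff_sref \<open>coeff h \<mu> \<noteq> 0\<close> by (simp add: in_keys_iff)
    then show False using top[of "sref i \<mu>"] False \<open>\<not> \<mu> i > 0\<close> by (simp add: height_sref)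
  qed
qed

lemma keys_anti_invariant_minus_alt:
  assumes h: "anti_invariant h" and \<mu>: "strictly_dominant \<mu>"
  shows "Poly_Mapping.keys (h - of_int (coeff h \<mu>) * alt \<mu>) \<subseteq> Poly_Mapping.keys h - {\<mu>}"
proof
  fix \<nu> assume "\<nu> \<in> Poly_Mapping.keys (h - of_int (coeff h \<mu>) * alt \<mu>)"
  then have \<nu>: "coeff h \<nu> \<noteq> coeff h \<mu> * coeff (alt \<mu>) \<nu>"
    by (simp add: in_keys_iff lookup_minus lookup_of_int_mult)
  show "\<nu> \<in> Poly_Mapping.keys h - {\<mu>}"
  proof (cases "coeff (alt \<mu>) \<nu> = 0")
    case True
    then show ?thesis using \<nu> coeff_alt_self[OF \<mu>] by (auto simp: in_keys_iff)
  next
    case False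
    then obtain w where "w \<in> weyl" "\<nu> = w \<mu>" using coeff_alt_nonzero by blast
    then show ?thesis
      using \<nu> coeff_alt_weyl[OF \<mu>] anti_invariant_coeff_weyl[OF h] by simp
  qed
qed

text \<open>Peel off the alternant of a monomial of maximal height and induct on the number of
  monomials.\<close>

lemma anti_invariant_eq_sum_alt:
  "anti_invariant h \<Longrightarrow> \<exists>M c. finite M \<and> M \<subseteq> Poly_Mapping.keys h \<and> (\<forall>\<mu>\<in>M. strictly_dominant \<mu>)
     \<and> h = (\<Sum>\<mu>\<in>M. of_int (c \<mu>) * alt \<mu>)"
proof (induction "card (Poly_Mapping.keys h)" arbitrary: h rule: less_induct)
  case less
  show ?case
  proof (cases "h = 0")
    case True
    then show ?thesis by (intro exI[of _ "{}"]) simp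
  next
    case False
    then obtain \<mu> where \<mu>: "\<mu> \<in> Poly_Mapping.keys h"
      and top: "\<And>\<nu>. \<nu> \<in> Poly_Mapping.keys h \<Longrightarrow> height \<nu> \<le> height \<mu>"
      using obtain_max_image[of "Poly_Mapping.keys h" height] by auto
    have sd: "strictly_dominant \<mu>"
      using anti_invariant_top_strictly_dominant[OF less.prems \<mu> top] .
    define h' where "h' = h - of_int (coeff h \<mu>) * alt \<mu>"
    have keys: "Poly_Mapping.keys h' \<subseteq> Poly_Mapping.keys h - {\<mu>}"
      unfolding h'_def by (rule keys_anti_invariant_minus_alt[OF less.prems sd])
    then have "card (Poly_Mapping.keys h') < card (Poly_Mapping.keys h)"
      using \<mu> by (intro psubset_card_mono) auto
    moreover have "anti_invariant h'"
      unfolding h'_def by (intro anti_invariant_diff anti_invariant_of_int_mult less.prems anti_invariant_alt)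
    ultimately obtain M c where M: "finite M" "M \<subseteq> Poly_Mapping.keys h'" "\<forall>\<mu>\<in>M. strictly_dominant \<mu>"
      "h' = (\<Sum>\<mu>\<in>M. of_int (c \<mu>) * alt \<mu>)"
      using less.hyps by blast
    have "\<mu> \<notin> M" using M(2) keys by blast
    have "h = of_int (coeff h \<mu>) * alt \<mu> + h'" by (simp add: h'_def)
    also have "h' = (\<Sum>\<nu>\<in>M. of_int ((c(\<mu> := coeff h \<mu>)) \<nu>) * alt \<nu>)"
      unfolding M(4) using \<open>\<mu> \<notin> M\<close> by (intro sum.cong) auto
    also have "of_int (coeff h \<mu>) * alt \<mu> + \<dots> = (\<Sum>\<nu>\<in>insert \<mu> M. of_int ((c(\<mu> := coeff h \<mu>)) \<nu>) * alt \<nu>)"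
      using M(1) \<open>\<mu> \<notin> M\<close> by simp
    finally have "h = (\<Sum>\<nu>\<in>insert \<mu> M. of_int ((c(\<mu> := coeff h \<mu>)) \<nu>) * alt \<nu>)" .
    then show ?thesis
      using M keys \<mu> sd by (intro exI[of _ "insert \<mu> M"] exI[of _ "c(\<mu> := coeff h \<mu>)"]) auto
  qed
qed

definition orbit :: "weight \<Rightarrow> weight set" where
  "orbit \<mu> = (\<lambda>w. w \<mu>) ` weyl"

definition orbit_sum :: "weight \<Rightarrow> grpring" where
  "orbit_sum \<mu> = (\<Sum>\<nu>\<in>orbit \<mu>. ex \<nu>)"

lemma finite_orbit: "finite (orbit \<mu>)"
  unfolding orbit_def using finite_weyl by simp

lemma coeff_orbit_sum: "coeff (orbit_sum \<mu>) \<nu> = (if \<nu> \<in> orbit \<mu> then 1 else 0)"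
  unfolding orbit_sum_def lookup_sum coeff_ex using finite_orbit by simp

lemma sref_in_orbit_iff: "sref i \<nu> \<in> orbit \<mu> \<longleftrightarrow> \<nu> \<in> orbit \<mu>"
proof -
  have "sref i \<nu> \<in> orbit \<mu>" if mem: "\<nu> \<in> orbit \<mu>" for \<nu>
  proof -
    obtain w where "w \<in> weyl" "\<nu> = w \<mu>" using mem unfolding orbit_def by blast
    then show ?thesis
      unfolding orbit_def by (intro image_eqI[of _ _ "sref i \<circ> w"]) (simp_all add: weyl_sref_left)
  qed
  then show ?thesis by (metis sref_sref)
qed

lemma sref_invariant_orbit_sum: "sref_invariant (orbit_sum \<mu>)"
  by (simp add: sref_invariant_def coeff_orbit_sum sref_in_orbit_iff)

lemma unitriangular_orbit_sum: "dominant \<mu> \<Longrightarrow> unitriangular (orbit_sum \<mu>) \<mu>"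
  unfolding unitriangular_def coeff_orbit_sum orbit_def
  using weyl_root_le_dominant weyl_id by (auto intro: rev_image_eqI[of id])

lemma strictly_dominant_rho: "strictly_dominant rho"
  by (simp add: strictly_dominant_def rho_def)

lemma orbit_sum_mult_alt_rho_minus_alt:
  assumes \<mu>: "dominant \<mu>"
  defines "h \<equiv> orbit_sum \<mu> * alt rho - alt (\<mu> + rho)"
  shows "anti_invariant h"
    and "\<And>\<nu>. \<nu> \<in> Poly_Mapping.keys h \<Longrightarrow> strictly_dominant \<nu> \<Longrightarrow>
           root_le (\<nu> - rho) \<mu> \<and> \<nu> - rho \<noteq> \<mu> \<and> dominant (\<nu> - rho)"
proof -
  show "anti_invariant h"
    unfolding h_def
    by (intro anti_invariant_diff sref_invariant_mult_anti_invariant sref_invariant_orbit_sum anti_invariant_alt)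
  have "strictly_dominant (\<mu> + rho)"
    using \<mu> by (simp add: strictly_dominant_def dominant_def rho_def add_nonneg_pos)
  then have U: "unitriangular (orbit_sum \<mu> * alt rho) (\<mu> + rho)" "unitriangular (alt (\<mu> + rho)) (\<mu> + rho)"
    using \<mu> by (simp_all add: unitriangular_mult unitriangular_orbit_sum unitriangular_alt strictly_dominant_rho)
  fix \<nu> assume "\<nu> \<in> Poly_Mapping.keys h" and sd: "strictly_dominant \<nu>"
  then have ne: "coeff (orbit_sum \<mu> * alt rho) \<nu> \<noteq> coeff (alt (\<mu> + rho)) \<nu>"
    by (simp add: h_def lookup_minus in_keys_iff)
  then have "\<nu> \<noteq> \<mu> + rho" using U by (auto simp: unitriangular_def)
  moreover have "root_le \<nu> (\<mu> + rho)"
    using ne U by (cases "coeff (alt (\<mu> + rho)) \<nu> = 0") (auto simp: unitriangular_def)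
  moreover have "dominant (\<nu> - rho)"
    using sd by (simp add: strictly_dominant_def dominant_def rho_def)
  ultimately show "root_le (\<nu> - rho) \<mu> \<and> \<nu> - rho \<noteq> \<mu> \<and> dominant (\<nu> - rho)"
    by (auto simp: root_le_def diff_le_eq diff_eq_eq)
qed

lemma unitriangular_diff:
  assumes "unitriangular f \<mu>" and "\<And>\<nu>. coeff g \<nu> \<noteq> 0 \<Longrightarrow> root_le \<nu> \<mu> \<and> \<nu> \<noteq> \<mu>"
  shows "unitriangular (f - g) \<mu>"
  unfolding unitriangular_def lookup_minus
proof (intro conjI allI impI)
  fix \<nu> assume "coeff f \<nu> - coeff g \<nu> \<noteq> 0"
  then show "root_le \<nu> \<mu>" using assms by (cases "coeff f \<nu> = 0") (auto simp: unitriangular_def)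
next
  show "coeff f \<mu> - coeff g \<mu> = 1" using assms(1) assms(2)[of \<mu>] by (auto simp: unitriangular_def)
qed

text \<open>Existence is by induction on the height: \<open>m\<^sub>\<mu> A\<^sub>\<rho> - A\<^sub>\<mu>\<^sub>+\<^sub>\<rho>\<close>, with \<open>m\<^sub>\<mu>\<close> the orbit sum,
  is anti-invariant with monomials strictly below \<open>\<mu> + \<rho>\<close>, hence a combination of alternants
  \<open>A\<^sub>\<nu>\<close> that, by induction, are \<open>\<chi>\<^sub>\<nu>\<^sub>-\<^sub>\<rho> A\<^sub>\<rho>\<close>.\<close>

lemma character_exists:
  "dominant \<mu> \<Longrightarrow> \<exists>\<chi>. \<chi> * alt rho = alt (\<mu> + rho) \<and> unitriangular \<chi> \<mu>"
proof (induction "nat (height \<mu>)" arbitrary: \<mu> rule: less_induct)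
  case less
  define h where "h = orbit_sum \<mu> * alt rho - alt (\<mu> + rho)"
  obtain M c where M: "finite M" "M \<subseteq> Poly_Mapping.keys h" "\<forall>\<nu>\<in>M. strictly_dominant \<nu>"
    "h = (\<Sum>\<nu>\<in>M. of_int (c \<nu>) * alt \<nu>)"
    using anti_invariant_eq_sum_alt[OF orbit_sum_mult_alt_rho_minus_alt(1)[OF less.prems]]
    unfolding h_def by blast
  have below: "root_le (\<nu> - rho) \<mu> \<and> \<nu> - rho \<noteq> \<mu> \<and> dominant (\<nu> - rho)" if "\<nu> \<in> M" for \<nu>
    using that M(2,3) orbit_sum_mult_alt_rho_minus_alt(2)[OF less.prems] unfolding h_def by blast
  have "\<exists>\<chi>. \<chi> * alt rho = alt \<nu> \<and> unitriangular \<chi> (\<nu> - rho)" if \<nu>: "\<nu> \<in> M" for \<nu>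
  proof -
    have "height (\<nu> - rho) < height \<mu>" "height (\<nu> - rho) \<ge> 0"
      using below[OF \<nu>] root_le_height_less dominant_height_nonneg by blast+
    then obtain \<chi> where "\<chi> * alt rho = alt (\<nu> - rho + rho)" "unitriangular \<chi> (\<nu> - rho)"
      using less.hyps below[OF \<nu>] by (metis nat_less_eq_zless)
    then show ?thesis by auto
  qed
  then obtain F where F: "\<And>\<nu>. \<nu> \<in> M \<Longrightarrow> F \<nu> * alt rho = alt \<nu> \<and> unitriangular (F \<nu>) (\<nu> - rho)"
    by metis
  define g where "g = (\<Sum>\<nu>\<in>M. of_int (c \<nu>) * F \<nu>)"
  have "g * alt rho = h"
    unfolding g_def M(4) sum_distrib_right by (intro sum.cong) (simp_all add: mult.assoc F)
  then have "(orbit_sum \<mu> - g) * alt rho = alt (\<mu> + rho)"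
    by (simp add: left_diff_distrib h_def)
  moreover have "coeff g \<kappa> \<noteq> 0 \<Longrightarrow> root_le \<kappa> \<mu> \<and> \<kappa> \<noteq> \<mu>" for \<kappa>
  proof -
    assume "coeff g \<kappa> \<noteq> 0"
    then obtain \<nu> where "\<nu> \<in> M" "c \<nu> * coeff (F \<nu>) \<kappa> \<noteq> 0"
      unfolding g_def lookup_sum lookup_of_int_mult by (auto elim: sum.not_neutral_contains_not_neutral)
    then have "root_le \<kappa> (\<nu> - rho)" "root_le (\<nu> - rho) \<mu>" "\<nu> - rho \<noteq> \<mu>"
      using F below by (auto simp: unitriangular_def)
    then show ?thesis by (metis root_le_antisym root_le_trans)
  qed
  then have "unitriangular (orbit_sum \<mu> - g) \<mu>"
    by (intro unitriangular_diff unitriangular_orbit_sum less.prems)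
  ultimately show ?case by blast
qed

lemma mult_alt_rho_cancel:
  assumes "\<chi>\<^sub>1 * alt rho = \<chi>\<^sub>2 * alt rho"
  shows "\<chi>\<^sub>1 = \<chi>\<^sub>2"
proof (rule ccontr)
  define d where "d = \<chi>\<^sub>1 - \<chi>\<^sub>2"
  assume "\<chi>\<^sub>1 \<noteq> \<chi>\<^sub>2"
  then obtain \<nu> where \<nu>: "\<nu> \<in> Poly_Mapping.keys d"
    and top: "\<And>l. l \<in> Poly_Mapping.keys d \<Longrightarrow> height l \<le> height \<nu>"
    using obtain_max_image[of "Poly_Mapping.keys d" height] by (auto simp: d_def)
  have "l = \<nu>" if "l \<in> Poly_Mapping.keys d" "root_le \<nu> l" for l
    using that top root_le_height root_le_height_eq by (metis order_antisym)
  then have "coeff (d * alt rho) (\<nu> + rho) = coeff d \<nu>"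
    by (rule coeff_mult_top[OF unitriangular_alt[OF strictly_dominant_rho]])
  moreover have "d * alt rho = 0" using assms by (simp add: d_def left_diff_distrib)
  ultimately show False using \<nu> by (simp add: in_keys_iff)
qed

lemma unitriangular_irrchar:
  assumes "dominant \<mu>"
  shows "unitriangular (irrchar \<mu>) \<mu>"
proof -
  obtain \<chi> where \<chi>: "\<chi> * alt rho = alt (\<mu> + rho)" "unitriangular \<chi> \<mu>"
    using character_exists[OF assms] by blast
  have "irrchar \<mu> = \<chi>"
    unfolding irrchar_def by (rule the_equality) (use \<chi> mult_alt_rho_cancel in auto)
  then show ?thesis using \<chi> by simp
qed

section \<open>Exterior powers of the adjoint representation\<close>

definition exponent_weight :: "(8 \<Rightarrow> nat) \<Rightarrow> weight" where
  "exponent_weight \<kappa> = (\<lambda>j. int (\<kappa> j))"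

lemma inj_exponent_weight: "inj exponent_weight"
  by (rule injI) (simp add: exponent_weight_def fun_eq_iff)

lemma unitriangular_fundmono: "unitriangular (fundmono \<kappa>) (exponent_weight \<kappa>)"
proof -
  have "dominant (omega l)" for l by (simp add: dominant_def omega_def)
  then have "unitriangular (\<Prod>l\<in>UNIV. fundchar l ^ \<kappa> l) (\<Sum>l\<in>UNIV. smul (int (\<kappa> l)) (omega l))"
    by (intro unitriangular_prod unitriangular_power) (simp_all add: fundchar_def unitriangular_irrchar)
  moreover have "(\<Sum>l\<in>UNIV. smul (int (\<kappa> l)) (omega l)) = exponent_weight \<kappa>"
    by (rule ext) (simp add: sum_apply smul_def omega_def exponent_weight_def
        if_distrib[of "(*) _"] cong: if_cong)
  ultimately show ?thesis by (simp add: fundmono_def)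
qed

text \<open>A weight of \<open>\<wedge>\<^sup>k e\<^sub>8\<close> is a sum of distinct roots (and zeros), so its root coordinates are
  bounded by those of the sum of all positive roots, which is \<open>2\<rho>\<close>.\<close>

lemma root_le_sum_roots:
  assumes "S \<subseteq> roots"
  shows "root_le (\<Sum>\<beta>\<in>S. \<beta>) (smul 2 rho)"
  unfolding root_le_def
proof
  fix k
  have S: "finite S" using assms finite_roots finite_subset by blast
  have "root_coord (\<Sum>\<beta>\<in>S. \<beta>) k = (\<Sum>\<beta>\<in>S \<inter> pos_roots. root_coord \<beta> k) + (\<Sum>\<beta>\<in>S - pos_roots. root_coord \<beta> k)"
    using S by (simp add: root_coord_sum sum.Int_Diff)
  also have "(\<Sum>\<beta>\<in>S - pos_roots. root_coord \<beta> k) \<le> 0"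
  proof (rule sum_nonpos)
    fix \<beta> assume "\<beta> \<in> S - pos_roots"
    then have "- \<beta> \<in> pos_roots" using assms not_pos_root_iff by blast
    then show "root_coord \<beta> k \<le> 0" by (simp add: pos_roots_iff)
  qed
  also have "(\<Sum>\<beta>\<in>S \<inter> pos_roots. root_coord \<beta> k) \<le> (\<Sum>\<beta>\<in>pos_roots. root_coord \<beta> k)"
    using finite_pos_roots by (intro sum_mono2) (auto simp: pos_roots_iff)
  finally show "root_coord (\<Sum>\<beta>\<in>S. \<beta>) k \<le> root_coord (smul 2 rho) k"
    by (simp add: root_coord_sum[symmetric] sum_pos_roots)
qed

lemma coeff_extchar_nonzero:
  assumes "coeff (extchar k) \<nu> \<noteq> 0"
  shows "root_le \<nu> (smul 2 rho)"
proof -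
  obtain S where S: "S \<subseteq> adj_index" "\<nu> = (\<Sum>x\<in>S. adj_wt x)"
  proof (rule ccontr)
    assume "\<not> thesis"
    then have "coeff (extchar k) \<nu> = 0"
      unfolding extchar_def lookup_sum coeff_ex by (intro sum.neutral) (use that in auto)
    then show False using assms by simp
  qed
  have "finite adj_index" using finite_roots by (simp add: adj_index_def)
  then have "finite S" using S(1) by (rule finite_subset[rotated])
  then have "(\<Sum>x\<in>S. adj_wt x) = (\<Sum>x\<in>S \<inter> range Inl. adj_wt x)"
    by (intro sum.mono_neutral_right) (auto simp: adj_wt_def split: sum.splits)
  also have "\<dots> = (\<Sum>\<beta>\<in>Inl -` S. \<beta>)"
    by (rule sum.reindex_cong[of Inl]) (auto simp: adj_wt_def)
  finally show ?thesis
    using S root_le_sum_roots[of "Inl -` S"] by (auto simp: adj_index_def)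
qed

lemma admissible_iff_root_le: "\<kappa> \<in> admissible \<longleftrightarrow> root_le (exponent_weight \<kappa>) (smul 2 rho)"
proof -
  have lhs: "(\<Sum>j\<in>UNIV. of_nat (\<kappa> j) * einv j k) = (of_int (root_coord (exponent_weight \<kappa>) k) :: rat)"
    and rhs: "2 * (\<Sum>j\<in>UNIV. einv j k) = (of_int (root_coord (smul 2 rho) k) :: rat)" for k
    by (simp_all add: einv_eq_inverse_cartan root_coord_def exponent_weight_def smul_def rho_def
        sum_distrib_left)
  show ?thesis unfolding admissible_def root_le_def mem_Collect_eq lhs rhs of_int_le_iff ..
qed

text \<open>Among the offending indices take one whose leading weight has maximal height: no other
  term of the expansion contributes to the coefficient of \<open>f\<close> at that weight.\<close>

lemma unitriangular_expansion_coeff_eq_0: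
  fixes N :: "'a \<Rightarrow> int" and g :: "'a \<Rightarrow> grpring" and lw :: "'a \<Rightarrow> weight"
  assumes fin: "finite {\<kappa>. N \<kappa> \<noteq> 0}"
    and f: "f = (\<Sum>\<kappa>\<in>{\<kappa>. N \<kappa> \<noteq> 0}. of_int (N \<kappa>) * g \<kappa>)"
    and g: "\<And>\<kappa>. unitriangular (g \<kappa>) (lw \<kappa>)" and inj: "inj lw"
    and supp: "\<And>\<nu>. coeff f \<nu> \<noteq> 0 \<Longrightarrow> root_le \<nu> bound"
    and \<iota>: "\<not> root_le (lw \<iota>) bound"
  shows "N \<iota> = 0"
proof (rule ccontr)
  let ?T = "{\<kappa>. N \<kappa> \<noteq> 0 \<and> \<not> root_le (lw \<kappa>) bound}"
  assume "N \<iota> \<noteq> 0"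
  then obtain \<kappa>\<^sub>0 where \<kappa>\<^sub>0: "\<kappa>\<^sub>0 \<in> ?T" and top: "\<And>\<kappa>. \<kappa> \<in> ?T \<Longrightarrow> height (lw \<kappa>) \<le> height (lw \<kappa>\<^sub>0)"
    using obtain_max_image[of ?T "\<lambda>\<kappa>. height (lw \<kappa>)"] fin \<iota> by (auto intro: finite_subset)
  have "N \<kappa> * coeff (g \<kappa>) (lw \<kappa>\<^sub>0) = 0" if "\<kappa> \<noteq> \<kappa>\<^sub>0" for \<kappa>
  proof (rule ccontr)
    assume "N \<kappa> * coeff (g \<kappa>) (lw \<kappa>\<^sub>0) \<noteq> 0"
    then have "N \<kappa> \<noteq> 0" "root_le (lw \<kappa>\<^sub>0) (lw \<kappa>)"
      using g by (auto simp: unitriangular_def)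
    moreover have "lw \<kappa>\<^sub>0 \<noteq> lw \<kappa>" using that inj by (auto dest: injD)
    ultimately have "\<kappa> \<in> ?T" "height (lw \<kappa>\<^sub>0) < height (lw \<kappa>)"
      using \<kappa>\<^sub>0 root_le_height_less by (auto intro: root_le_trans)
    then show False using top by fastforce
  qed
  then have rest: "(\<Sum>\<kappa>\<in>{\<kappa>. N \<kappa> \<noteq> 0} - {\<kappa>\<^sub>0}. N \<kappa> * coeff (g \<kappa>) (lw \<kappa>\<^sub>0)) = 0"
    by (intro sum.neutral) blast
  have "\<kappa>\<^sub>0 \<in> {\<kappa>. N \<kappa> \<noteq> 0}" using \<kappa>\<^sub>0 by simp
  have "coeff f (lw \<kappa>\<^sub>0) = (\<Sum>\<kappa>\<in>{\<kappa>. N \<kappa> \<noteq> 0}. N \<kappa> * coeff (g \<kappa>) (lw \<kappa>\<^sub>0))"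
    unfolding f lookup_sum lookup_of_int_mult by simp
  also have "\<dots> = N \<kappa>\<^sub>0 * coeff (g \<kappa>\<^sub>0) (lw \<kappa>\<^sub>0)"
    using sum.remove[OF fin \<open>\<kappa>\<^sub>0 \<in> {\<kappa>. N \<kappa> \<noteq> 0}\<close>, of "\<lambda>\<kappa>. N \<kappa> * coeff (g \<kappa>) (lw \<kappa>\<^sub>0)"] rest
    by simp
  finally have "coeff f (lw \<kappa>\<^sub>0) = N \<kappa>\<^sub>0 * coeff (g \<kappa>\<^sub>0) (lw \<kappa>\<^sub>0)" .
  then have "coeff f (lw \<kappa>\<^sub>0) \<noteq> 0" using g \<kappa>\<^sub>0 by (simp add: unitriangular_def)
  then show False using supp \<kappa>\<^sub>0 by blast
qed

theorem lemma2p3: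
  fixes k :: nat and N :: "(8 \<Rightarrow> nat) \<Rightarrow> int" and \<iota> :: "8 \<Rightarrow> nat"
  assumes "k \<le> 248"
    and "finite {\<kappa>. N \<kappa> \<noteq> 0}"
    and "extchar k = (\<Sum>\<kappa>\<in>{\<kappa>. N \<kappa> \<noteq> 0}. of_int (N \<kappa>) * fundmono \<kappa>)"
    and "\<iota> \<notin> admissible"
  shows "N \<iota> = 0"
proof (rule unitriangular_expansion_coeff_eq_0[OF assms(2,3)])
  show "\<And>\<kappa>. unitriangular (fundmono \<kappa>) (exponent_weight \<kappa>)" by (rule unitriangular_fundmono)
  show "inj exponent_weight" by (rule inj_exponent_weight)
  show "\<And>\<nu>. coeff (extchar k) \<nu> \<noteq> 0 \<Longrightarrow> root_le \<nu> (smul 2 rho)" by (rule coeff_extchar_nonzero)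
  show "\<not> root_le (exponent_weight \<iota>) (smul 2 rho)"
    using assms(4) by (simp add: admissible_iff_root_le)
qed
end
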